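(* Assume (A1) and (A2), and let $\mu\in X$ be a mixed stationary Nash equilibrium of the mean field game. Then for every $\epsilon>0$ there exists $N_\epsilon\in\mathbb N$ such that for every $N>N_\epsilon$, every collection of deterministic policies $\{u^i\}_{i\in[N]}$ ($u^i\in\mathcal U^{c^i}_D$) of a population of $N$ players satisfying $$\Big|\tfrac1N\textstyle\sum_{i\in\mathcal C_c}\delta_{u^i}(u)-\mu^c[\mathcal S^c,u]\Big|<\tfrac1N\quad\text{for all }c\in[C],\ u\in\mathcal U^c_D$$ is a weak $\epsilon$-MSNE of the $N$-player game, i.e., for all $i\in[N]$ and all $v^i\in\mathcal U^{c^i}_D$, $$J^{i,N}(u^1,\dots,u^i,\dots,u^N)\ge J^{i,N}(u^1,\dots,v^i,\dots,u^N)-\epsilon.$$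
   Context: Model: classes $c\in[C]$ with masses $m^c>0$, finite state sets $\mathcal S^c$, nonempty finite admissible action sets $\mathcal A^c(s)$ ($\mathcal A^c=\bigcup_s\mathcal A^c(s)$), transition kernels $\phi^c(\cdot\mid s,a)\in\mathcal P(\mathcal S^c)$, rates $\lambda^c>0$; $p=\sum_c|\mathcal S^c|,q=\sum_c|\mathcal A^c|$. $\mathcal U^c_D$ = deterministic policies (maps $s\mapsto u(s)\in\mathcal A^c(s)$; $u(a\mid s)=\mathbf 1[a=u(s)]$). $\phi^{c,u}_{ss'}=\phi^c(s\mid s',u(s'))$. (A2): for all $c,u\in\mathcal U^c_D$, $\phi^{c,u}$ has exactly one recurrent communicating class; $\eta^{c,u}$ is the unique stationary distribution of the continuous-time chain with generator $\lambda^c(\phi^{c,u}-I)$. $X=\prod_c\{\mu^c\in\mathbb R_{\ge0}^{\mathcal S^c\times\mathcal U^c_D}:\sum\mu^c=m^c\}$, $X_{\mathcal S\times\mathcal A}=\prod_c\{\nu\in\mathbb R_{\ge0}^{\mathcal S^c\times\mathcal A^c}:\sum\nu=m^c\}$; $\mu^c_{\mathcal S\times\mathcal A}[s,a]=\sum_u\mu^c[s,u]u(a\mid s)$; $\mu^c[\mathcal S^c,u]=\sum_s\mu^c[s,u]$. Rewards $r^c:\mathcal S^c\times\mathcal A^c\times X_{\mathcal S\times\mathcal A}\to\mathbb R$; (A1): each $r^c(s,a,\cdot)$ extends to $\mathbb R^{pq}_{\ge0}$ with an extension continuously differentiable on $X_{\mathcal S\times\mathcal A}$. $F^c_u(\mu)=\sum_{s}\sum_{a\in\mathcal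 A^c(s)}\eta^{c,u}(s)u(a\mid s)r^c(s,a,\mu_{\mathcal S\times\mathcal A})$. MSNE: $\mu\in X$ with, for all $c,u$: (i) $\mu^c[\mathcal S^c,u]>0\Rightarrow F^c_u(\mu)\ge F^c_v(\mu)\ \forall v\in\mathcal U^c_D$; (ii) $\mu^c[s,u]=\eta^{c,u}(s)\mu^c[\mathcal S^c,u]$ for all $s$. $N$-player game: player $i$ belongs to class $c^i$, $\mathcal C_c=\{i:c^i=c\}$, $|\mathcal C_c|/N=m^c$; each player $i\in\mathcal C_c$ has an independent Poisson clock of rate $\lambda^c$ with ring times $t^i_1<t^i_2<\dots$; at a ring, a player in state $s$ with policy $u^i$ takes action $a^i=u^i(s)$ and moves to a state drawn from $\phi^c(\cdot\mid s,a^i)$. $s^i(t)$ is its state; $\hat\mu^c_{\mathcal S\times\mathcal A}[s,a](t)=\frac1N\sum_{j\in\mathcal C_c}\delta_{s^j(t)}(s)\delta_{a^j(t)}(a)$ with $a^j(t)=u^j(s^j(t))$. The payoff is $J^{i,N}(u^1,\dots,u^N)=\lim_{T\to\infty}\frac1T\mathbb E\big[\sum_{k=1}^Tr^{c^i}(s^i(t^i_k),a^i(t^i_k),\hat\mu_{\mathcal S\times\mathcal A}(t^i_k))\big]$. *)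

theory Defs
  imports "HOL-Probability.Probability"
begin

text \<open>Model data (all parameters passed explicitly):
  S c = state set of class c, A c s = admissible actions, phi c s a = transition kernel,
  lam c = clock rate, m c = mass, r c s a nu = reward.\<close>

definition Acl :: "('c \<Rightarrow> 's set) \<Rightarrow> ('c \<Rightarrow> 's \<Rightarrow> 'a set) \<Rightarrow> 'c \<Rightarrow> 'a set" where
  "Acl S A c = (\<Union>s\<in>S c. A c s)"

definition UD :: "('c \<Rightarrow> 's set) \<Rightarrow> ('c \<Rightarrow> 's \<Rightarrow> 'a set) \<Rightarrow> 'c \<Rightarrow> ('s \<Rightarrow> 'a) set" where
  "UD S A c = PiE (S c) (A c)"

text \<open>Stationary distributions of the CTMC with generator lam c (phi^{c,u} - I).\<close>
definition stationary_dist ::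
  "('c \<Rightarrow> 's set) \<Rightarrow> ('c \<Rightarrow> 's \<Rightarrow> 'a \<Rightarrow> 's pmf) \<Rightarrow> ('c \<Rightarrow> real) \<Rightarrow> 'c \<Rightarrow> ('s \<Rightarrow> 'a) \<Rightarrow> ('s \<Rightarrow> real) \<Rightarrow> bool" where
  "stationary_dist S phi lam c u \<eta> \<longleftrightarrow>
     (\<forall>s. 0 \<le> \<eta> s) \<and> (\<forall>s. s \<notin> S c \<longrightarrow> \<eta> s = 0) \<and> sum \<eta> (S c) = 1 \<and>
     (\<forall>s\<in>S c. (\<Sum>s'\<in>S c. \<eta> s' * (lam c * (pmf (phi c s' (u s')) s - (if s' = s then 1 else 0)))) = 0)"

definition eta ::
  "('c \<Rightarrow> 's set) \<Rightarrow> ('c \<Rightarrow> 's \<Rightarrow> 'a \<Rightarrow> 's pmf) \<Rightarrow> ('c \<Rightarrow> real) \<Rightarrow> 'c \<Rightarrow> ('s \<Rightarrow> 'a) \<Rightarrow> 's \<Rightarrow> real" where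
  "eta S phi lam c u = (THE \<eta>. stationary_dist S phi lam c u \<eta>)"

definition step_rel :: "('c \<Rightarrow> 's set) \<Rightarrow> ('c \<Rightarrow> 's \<Rightarrow> 'a \<Rightarrow> 's pmf) \<Rightarrow> 'c \<Rightarrow> ('s \<Rightarrow> 'a) \<Rightarrow> ('s \<times> 's) set" where
  "step_rel S phi c u = {(s, s'). s \<in> S c \<and> 0 < pmf (phi c s (u s)) s'}"

text \<open>Recurrent communicating class of a finite chain = closed communicating class.\<close>
definition recurrent_class :: "('c \<Rightarrow> 's set) \<Rightarrow> ('c \<Rightarrow> 's \<Rightarrow> 'a \<Rightarrow> 's pmf) \<Rightarrow> 'c \<Rightarrow> ('s \<Rightarrow> 'a) \<Rightarrow> 's set \<Rightarrow> bool" where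
  "recurrent_class S phi c u R \<longleftrightarrow> R \<noteq> {} \<and> R \<subseteq> S c \<and>
     (\<forall>s\<in>R. \<forall>s'. (s, s') \<in> (step_rel S phi c u)\<^sup>* \<longrightarrow> s' \<in> R) \<and>
     (\<forall>s\<in>R. \<forall>s'\<in>R. (s, s') \<in> (step_rel S phi c u)\<^sup>*)"

definition assumption_A2 :: "('c \<Rightarrow> 's set) \<Rightarrow> ('c \<Rightarrow> 's \<Rightarrow> 'a set) \<Rightarrow> ('c \<Rightarrow> 's \<Rightarrow> 'a \<Rightarrow> 's pmf) \<Rightarrow> bool" where
  "assumption_A2 S A phi \<longleftrightarrow> (\<forall>c. \<forall>u\<in>UD S A c. \<exists>!R. recurrent_class S phi c u R)"

definition Xset :: "('c \<Rightarrow> 's set) \<Rightarrow> ('c \<Rightarrow> 's \<Rightarrow> 'a set) \<Rightarrow> ('c \<Rightarrow> real) \<Rightarrow> ('c \<Rightarrow> 's \<Rightarrow> ('s \<Rightarrow> 'a) \<Rightarrow> real) set" where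
  "Xset S A m = {\<mu>. \<forall>c. (\<forall>s u. 0 \<le> \<mu> c s u) \<and> (\<forall>s u. (s \<notin> S c \<or> u \<notin> UD S A c) \<longrightarrow> \<mu> c s u = 0) \<and>
      (\<Sum>s\<in>S c. \<Sum>u\<in>UD S A c. \<mu> c s u) = m c}"

definition XSA :: "('c \<Rightarrow> 's set) \<Rightarrow> ('c \<Rightarrow> 's \<Rightarrow> 'a set) \<Rightarrow> ('c \<Rightarrow> real) \<Rightarrow> ('c \<Rightarrow> 's \<Rightarrow> 'a \<Rightarrow> real) set" where
  "XSA S A m = {\<nu>. \<forall>c. (\<forall>s a. 0 \<le> \<nu> c s a) \<and> (\<forall>s a. (s \<notin> S c \<or> a \<notin> Acl S A c) \<longrightarrow> \<nu> c s a = 0) \<and>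
      (\<Sum>s\<in>S c. \<Sum>a\<in>Acl S A c. \<nu> c s a) = m c}"

definition muSA :: "('c \<Rightarrow> 's set) \<Rightarrow> ('c \<Rightarrow> 's \<Rightarrow> 'a set) \<Rightarrow> ('c \<Rightarrow> 's \<Rightarrow> ('s \<Rightarrow> 'a) \<Rightarrow> real) \<Rightarrow> 'c \<Rightarrow> 's \<Rightarrow> 'a \<Rightarrow> real" where
  "muSA S A \<mu> c s a = (\<Sum>u\<in>UD S A c. \<mu> c s u * (if u s = a then 1 else 0))"

definition mass :: "('c \<Rightarrow> 's set) \<Rightarrow> ('c \<Rightarrow> 's \<Rightarrow> ('s \<Rightarrow> 'a) \<Rightarrow> real) \<Rightarrow> 'c \<Rightarrow> ('s \<Rightarrow> 'a) \<Rightarrow> real" where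
  "mass S \<mu> c u = (\<Sum>s\<in>S c. \<mu> c s u)"

definition vecSA :: "('c \<Rightarrow> 's \<Rightarrow> 'a \<Rightarrow> real) \<Rightarrow> real ^ ('c::finite \<times> 's::finite \<times> 'a::finite)" where
  "vecSA \<nu> = (\<chi> k. \<nu> (fst k) (fst (snd k)) (snd (snd k)))"

definition assumption_A1 ::
  "('c::finite \<Rightarrow> 's::finite set) \<Rightarrow> ('c \<Rightarrow> 's \<Rightarrow> 'a::finite set) \<Rightarrow> ('c \<Rightarrow> real) \<Rightarrow>
   ('c \<Rightarrow> 's \<Rightarrow> 'a \<Rightarrow> ('c \<Rightarrow> 's \<Rightarrow> 'a \<Rightarrow> real) \<Rightarrow> real) \<Rightarrow> bool" where
  "assumption_A1 S A m r \<longleftrightarrow>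
    (\<forall>c. \<forall>s\<in>S c. \<forall>a\<in>Acl S A c.
       \<exists>(g :: real ^ ('c \<times> 's \<times> 'a) \<Rightarrow> real) g'.
         (\<forall>\<nu>\<in>XSA S A m. g (vecSA \<nu>) = r c s a \<nu>) \<and>
         (\<forall>\<nu>\<in>XSA S A m. (g has_derivative (\<lambda>h. g' (vecSA \<nu>) \<bullet> h))
                            (at (vecSA \<nu>) within {x. \<forall>k. 0 \<le> x $ k})) \<and>
         continuous_on (vecSA ` XSA S A m) g')"

definition Fval ::
  "('c \<Rightarrow> 's set) \<Rightarrow> ('c \<Rightarrow> 's \<Rightarrow> 'a set) \<Rightarrow> ('c \<Rightarrow> 's \<Rightarrow> 'a \<Rightarrow> 's pmf) \<Rightarrow> ('c \<Rightarrow> real) \<Rightarrow>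
   ('c \<Rightarrow> 's \<Rightarrow> 'a \<Rightarrow> ('c \<Rightarrow> 's \<Rightarrow> 'a \<Rightarrow> real) \<Rightarrow> real) \<Rightarrow> 'c \<Rightarrow> ('s \<Rightarrow> 'a) \<Rightarrow>
   ('c \<Rightarrow> 's \<Rightarrow> ('s \<Rightarrow> 'a) \<Rightarrow> real) \<Rightarrow> real" where
  "Fval S A phi lam r c u \<mu> =
     (\<Sum>s\<in>S c. \<Sum>a\<in>A c s. eta S phi lam c u s * (if a = u s then 1 else 0) * r c s a (muSA S A \<mu>))"

definition MSNE ::
  "('c \<Rightarrow> 's set) \<Rightarrow> ('c \<Rightarrow> 's \<Rightarrow> 'a set) \<Rightarrow> ('c \<Rightarrow> 's \<Rightarrow> 'a \<Rightarrow> 's pmf) \<Rightarrow> ('c \<Rightarrow> real) \<Rightarrow> ('c \<Rightarrow> real) \<Rightarrow>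
   ('c \<Rightarrow> 's \<Rightarrow> 'a \<Rightarrow> ('c \<Rightarrow> 's \<Rightarrow> 'a \<Rightarrow> real) \<Rightarrow> real) \<Rightarrow> ('c \<Rightarrow> 's \<Rightarrow> ('s \<Rightarrow> 'a) \<Rightarrow> real) \<Rightarrow> bool" where
  "MSNE S A phi lam m r \<mu> \<longleftrightarrow> \<mu> \<in> Xset S A m \<and>
     (\<forall>c. \<forall>u\<in>UD S A c.
        (0 < mass S \<mu> c u \<longrightarrow> (\<forall>v\<in>UD S A c. Fval S A phi lam r c u \<mu> \<ge> Fval S A phi lam r c v \<mu>)) \<and>
        (\<forall>s\<in>S c. \<mu> c s u = eta S phi lam c u s * mass S \<mu> c u))"

section \<open>N-player game (players 0..<N, class map cl, policy profile p)\<close>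

definition emp :: "nat \<Rightarrow> (nat \<Rightarrow> 'c) \<Rightarrow> (nat \<Rightarrow> 's \<Rightarrow> 'a) \<Rightarrow> (nat \<Rightarrow> 's) \<Rightarrow> 'c \<Rightarrow> 's \<Rightarrow> 'a \<Rightarrow> real" where
  "emp N cl p x c s a = real (card {j. j < N \<and> cl j = c \<and> x j = s \<and> p j (x j) = a}) / real N"

text \<open>Superposition of the independent Poisson clocks: the next ringing clock belongs to
  player j with probability lam(c^j) / sum_l lam(c^l).\<close>
definition sel :: "nat \<Rightarrow> (nat \<Rightarrow> 'c) \<Rightarrow> ('c \<Rightarrow> real) \<Rightarrow> nat pmf" where
  "sel N cl lam = embed_pmf (\<lambda>j. if j < N then lam (cl j) / (\<Sum>l<N. lam (cl l)) else 0)"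

text \<open>One step of the embedded jump chain; the second component counts the rings of player i.\<close>
definition kstep ::
  "nat \<Rightarrow> (nat \<Rightarrow> 'c) \<Rightarrow> ('c \<Rightarrow> real) \<Rightarrow> ('c \<Rightarrow> 's \<Rightarrow> 'a \<Rightarrow> 's pmf) \<Rightarrow> (nat \<Rightarrow> 's \<Rightarrow> 'a) \<Rightarrow> nat \<Rightarrow>
   (nat \<Rightarrow> 's) \<times> nat \<Rightarrow> ((nat \<Rightarrow> 's) \<times> nat) pmf" where
  "kstep N cl lam phi p i xk =
     bind_pmf (sel N cl lam) (\<lambda>j.
       map_pmf (\<lambda>s'. ((fst xk)(j := s'), if j = i then Suc (snd xk) else snd xk))
               (phi (cl j) (fst xk j) (p j (fst xk j))))"

definition dist ::
  "nat \<Rightarrow> (nat \<Rightarrow> 'c) \<Rightarrow> ('c \<Rightarrow> real) \<Rightarrow> ('c \<Rightarrow> 's \<Rightarrow> 'a \<Rightarrow> 's pmf) \<Rightarrow> (nat \<Rightarrow> 's \<Rightarrow> 'a) \<Rightarrow> nat \<Rightarrow>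
   (nat \<Rightarrow> 's) pmf \<Rightarrow> nat \<Rightarrow> ((nat \<Rightarrow> 's) \<times> nat) pmf" where
  "dist N cl lam phi p i init n =
     ((\<lambda>q. bind_pmf q (kstep N cl lam phi p i)) ^^ n) (map_pmf (\<lambda>x. (x, 0)) init)"

text \<open>Expected total reward of player i over its first T clock rings: the (n+1)-th ring
  overall is player i's (k+1)-th ring iff the selected player is i and k rings of i occurred
  before; the reward is evaluated at the (pre-jump) state at the ring time.\<close>
definition reward_upto ::
  "nat \<Rightarrow> (nat \<Rightarrow> 'c) \<Rightarrow> ('c \<Rightarrow> real) \<Rightarrow> ('c \<Rightarrow> 's \<Rightarrow> 'a \<Rightarrow> 's pmf) \<Rightarrow>
   ('c \<Rightarrow> 's \<Rightarrow> 'a \<Rightarrow> ('c \<Rightarrow> 's \<Rightarrow> 'a \<Rightarrow> real) \<Rightarrow> real) \<Rightarrow> (nat \<Rightarrow> 's \<Rightarrow> 'a) \<Rightarrow> (nat \<Rightarrow> 's) pmf \<Rightarrow>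
   nat \<Rightarrow> nat \<Rightarrow> real" where
  "reward_upto N cl lam phi r p init i T =
     (\<Sum>n. measure_pmf.expectation (pair_pmf (dist N cl lam phi p i init n) (sel N cl lam))
        (\<lambda>((x, k), j). if j = i \<and> k < T then r (cl i) (x i) (p i (x i)) (emp N cl p x) else 0))"

definition Jpay ::
  "nat \<Rightarrow> (nat \<Rightarrow> 'c) \<Rightarrow> ('c \<Rightarrow> real) \<Rightarrow> ('c \<Rightarrow> 's \<Rightarrow> 'a \<Rightarrow> 's pmf) \<Rightarrow>
   ('c \<Rightarrow> 's \<Rightarrow> 'a \<Rightarrow> ('c \<Rightarrow> 's \<Rightarrow> 'a \<Rightarrow> real) \<Rightarrow> real) \<Rightarrow> (nat \<Rightarrow> 's \<Rightarrow> 'a) \<Rightarrow> (nat \<Rightarrow> 's) pmf \<Rightarrow>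
   nat \<Rightarrow> real" where
  "Jpay N cl lam phi r p init i = lim (\<lambda>T. reward_upto N cl lam phi r p init i T / real T)"

end

theory Submission
  imports Defs
begin

text \<open>Under (A2) every deterministic policy has a unique stationary law, and the chain of
  configurations of the \<open>N\<close>-player game, observed at the rings of the clocks, has a unique
  stationary law: the product of the stationary laws of the individual players. The long-run
  average payoff of a player is therefore its expected reward under this product law, because the
  normalised occupation measures up to its \<open>T\<close>-th ring are approximately invariant and hence
  converge to it. Under the product law the empirical state-action measure has variance
  \<open>O(1/N)\<close>, and its mean is within \<open>O(1/N)\<close> of the state-action measure of \<open>\<mu>\<close> when the policy
  counts match the masses of \<open>\<mu>\<close>, also after one player deviates. As (A1) makes the rewards
  uniformly continuous and bounded on the compact set of state-action measures, the payoffs of the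
  profile and of any unilateral deviation are within \<open>\<epsilon>/2\<close> of the mean field values \<open>F\<close> for
  large \<open>N\<close>. A policy played by some player has positive mass under \<open>\<mu>\<close>, so it maximises \<open>F\<close>.\<close>

section \<open>Stationary vectors of finite Markov kernels\<close>

definition kernel_apply :: "'x set \<Rightarrow> ('x \<Rightarrow> 'x pmf) \<Rightarrow> ('x \<Rightarrow> real) \<Rightarrow> 'x \<Rightarrow> real" where
  "kernel_apply E K v y = (\<Sum>x\<in>E. v x * pmf (K x) y)"

definition closed_kernel :: "'x set \<Rightarrow> ('x \<Rightarrow> 'x pmf) \<Rightarrow> bool" where
  "closed_kernel E K \<longleftrightarrow> (\<forall>x\<in>E. set_pmf (K x) \<subseteq> E)"

definition prob_vector :: "'x set \<Rightarrow> ('x \<Rightarrow> real) \<Rightarrow> bool" where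
  "prob_vector E v \<longleftrightarrow> (\<forall>x. 0 \<le> v x) \<and> (\<forall>x. x \<notin> E \<longrightarrow> v x = 0) \<and> sum v E = 1"

definition stationary_vector :: "'x set \<Rightarrow> ('x \<Rightarrow> 'x pmf) \<Rightarrow> ('x \<Rightarrow> real) \<Rightarrow> bool" where
  "stationary_vector E K v \<longleftrightarrow> prob_vector E v \<and> (\<forall>y\<in>E. kernel_apply E K v y = v y)"

definition support_rel :: "('x \<Rightarrow> 'x pmf) \<Rightarrow> ('x \<times> 'x) set" where
  "support_rel K = {(x, y). y \<in> set_pmf (K x)}"

lemma kernel_apply_linear:
  "kernel_apply E K (\<lambda>x. a * f x + b * g x) y = a * kernel_apply E K f y + b * kernel_apply E K g y"
  by (simp add: kernel_apply_def sum.distrib sum_distrib_left algebra_simps)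

lemma kernel_apply_diff:
  "kernel_apply E K (\<lambda>x. f x - g x) y = kernel_apply E K f y - kernel_apply E K g y"
  by (simp add: kernel_apply_def sum_subtractf algebra_simps)

lemma kernel_apply_scale: "kernel_apply E K (\<lambda>x. c * f x) y = c * kernel_apply E K f y"
  by (simp add: kernel_apply_def sum_distrib_left mult.assoc)

lemma sum_kernel_apply:
  assumes "finite E" "closed_kernel E K"
  shows "(\<Sum>y\<in>E. kernel_apply E K g y) = sum g E"
proof -
  have "(\<Sum>y\<in>E. kernel_apply E K g y) = (\<Sum>x\<in>E. g x * (\<Sum>y\<in>E. pmf (K x) y))"
    unfolding kernel_apply_def by (subst sum.swap) (simp add: sum_distrib_left)
  also have "\<dots> = sum g E"
    using assms by (intro sum.cong refl) (simp add: sum_pmf_eq_1 closed_kernel_def)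
  finally show ?thesis .
qed

lemma kernel_apply_pmf:
  assumes "finite E" "set_pmf q \<subseteq> E"
  shows "kernel_apply E K (pmf q) y = pmf (bind_pmf q K) y"
proof -
  have "pmf (bind_pmf q K) y = (\<Sum>x\<in>E. pmf (K x) y * pmf q x)"
    unfolding pmf_bind using assms by (intro integral_measure_pmf_real) auto
  then show ?thesis by (simp add: kernel_apply_def mult.commute)
qed

lemma prob_vector_le_1:
  assumes "finite E" "prob_vector E v"
  shows "v x \<le> 1"
proof (cases "x \<in> E")
  case True
  then have "v x \<le> sum v E" using assms by (intro member_le_sum) (auto simp: prob_vector_def)
  then show ?thesis using assms by (simp add: prob_vector_def)
qed (use assms in \<open>simp add: prob_vector_def\<close>)

lemma invariant_positive_along_support:
  assumes fin: "finite E" and cl: "closed_kernel E K"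
    and inv: "\<forall>y\<in>E. kernel_apply E K g y = g y" and nn: "\<forall>x. 0 \<le> g x"
    and path: "(x, y) \<in> (support_rel K)\<^sup>*" and x: "x \<in> E" "0 < g x"
  shows "y \<in> E \<and> 0 < g y"
  using path
proof (induction rule: rtrancl_induct)
  case base
  then show ?case using x by simp
next
  case (step y z)
  then have yE: "y \<in> E" and gy: "0 < g y" and zK: "z \<in> set_pmf (K y)"
    by (auto simp: support_rel_def)
  then have zE: "z \<in> E" using cl by (auto simp: closed_kernel_def)
  have "g y * pmf (K y) z \<le> (\<Sum>x\<in>E. g x * pmf (K x) z)"
    using fin yE nn by (intro member_le_sum) auto
  moreover have "0 < g y * pmf (K y) z" using gy zK by (simp add: pmf_positive)
  ultimately have "0 < kernel_apply E K g z" unfolding kernel_apply_def by linarith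
  then show ?case using inv zE by auto
qed

text \<open>The positive part of the difference of two stationary vectors is again invariant, since
  the absolute value of an invariant vector is subinvariant with the same total mass.\<close>

lemma stationary_vector_less_propagates:
  assumes fin: "finite E" and cl: "closed_kernel E K"
    and reach: "\<forall>x\<in>E. (x, z) \<in> (support_rel K)\<^sup>*"
    and s1: "stationary_vector E K p1" and s2: "stationary_vector E K p2"
    and x: "x \<in> E" "p2 x < p1 x"
  shows "p2 z < p1 z"
proof -
  define d where "d = (\<lambda>x. p1 x - p2 x)"
  have inv_d: "kernel_apply E K d y = d y" if "y \<in> E" for y
    using s1 s2 that unfolding d_def stationary_vector_def by (simp add: kernel_apply_diff)
  define a where "a = (\<lambda>x. \<bar>d x\<bar>)"
  have sub_a: "a y \<le> kernel_apply E K a y" if "y \<in> E" for y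
  proof -
    have "a y = \<bar>\<Sum>x\<in>E. d x * pmf (K x) y\<bar>" using inv_d[OF that] by (simp add: a_def kernel_apply_def)
    also have "\<dots> \<le> (\<Sum>x\<in>E. \<bar>d x * pmf (K x) y\<bar>)" by (rule sum_abs)
    also have "\<dots> = kernel_apply E K a y" by (simp add: kernel_apply_def a_def abs_mult)
    finally show ?thesis .
  qed
  have "(\<Sum>y\<in>E. kernel_apply E K a y - a y) = 0"
    using sum_kernel_apply[OF fin cl, of a] by (simp add: sum_subtractf)
  then have inv_a: "\<forall>y\<in>E. kernel_apply E K a y = a y"
    using fin sub_a by (subst (asm) sum_nonneg_eq_0_iff) auto
  define g where "g = (\<lambda>x. (1/2) * a x + (1/2) * d x)"
  have inv_g: "\<forall>y\<in>E. kernel_apply E K g y = g y"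
    unfolding g_def using inv_a inv_d kernel_apply_linear[of E K "1/2" a "1/2" d] by simp
  have "\<forall>x. 0 \<le> g x" by (simp add: g_def a_def) arith
  moreover have "0 < g x" using x by (simp add: g_def a_def d_def)
  ultimately have "0 < g z"
    using invariant_positive_along_support[OF fin cl inv_g] reach x(1) by blast
  then show ?thesis unfolding g_def a_def d_def by (auto simp: abs_if field_simps split: if_splits)
qed

lemma stationary_vector_unique:
  assumes fin: "finite E" and cl: "closed_kernel E K"
    and reach: "\<forall>x\<in>E. (x, z) \<in> (support_rel K)\<^sup>*"
    and s1: "stationary_vector E K p1" and s2: "stationary_vector E K p2"
  shows "p1 = p2"
proof (rule ccontr)
  have less_somewhere: "\<exists>y\<in>E. q2 y < q1 y"
    if "stationary_vector E K q1" "stationary_vector E K q2" "x \<in> E" "q1 x < q2 x" for q1 q2 x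
  proof (rule ccontr)
    assume "\<not> ?thesis"
    then have "sum q1 E < sum q2 E" using that fin by (intro sum_strict_mono_ex1) auto
    then show False using that by (simp add: stationary_vector_def prob_vector_def)
  qed
  have no_less: False
    if q: "stationary_vector E K q1" "stationary_vector E K q2" "x \<in> E" "q1 x < q2 x" for q1 q2 x
  proof -
    obtain y where "y \<in> E" "q2 y < q1 y" using less_somewhere[OF q] by blast
    then have "q2 z < q1 z" using stationary_vector_less_propagates[OF fin cl reach q(1,2)] by blast
    moreover have "q1 z < q2 z" using stationary_vector_less_propagates[OF fin cl reach q(2,1,3,4)] .
    ultimately show False by simp
  qed
  assume "p1 \<noteq> p2"
  then obtain x where x: "p1 x \<noteq> p2 x" by auto
  then have "x \<in> E" using s1 s2 unfolding stationary_vector_def prob_vector_def by metis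
  then show False using x no_less[OF s1 s2] no_less[OF s2 s1] by (meson linorder_neqE_linordered_idom)
qed

lemma prob_vector_convergent_subseq:
  fixes v :: "nat \<Rightarrow> 'x \<Rightarrow> real"
  assumes fin: "finite E" and prob: "\<forall>n. prob_vector E (v n)"
  obtains r \<pi> where "strict_mono r" "prob_vector E \<pi>" "\<And>y. (\<lambda>n. v (r n) y) \<longlonglongrightarrow> \<pi> y"
proof -
  have "\<bar>v n k\<bar> \<le> 1" for n k
    using prob_vector_le_1[OF fin prob[rule_format, of n]] prob by (auto simp: prob_vector_def)
  then have bnd: "bounded ((\<lambda>x. x k) ` range v)" for k
    unfolding bounded_iff by (intro exI[of _ 1]) auto
  have "\<forall>\<delta>\<subseteq>E. \<exists>l r. strict_mono r \<and>
      (\<forall>\<epsilon>>0. \<forall>\<^sub>F n in sequentially. \<forall>i\<in>\<delta>. dist_class.dist (v (r n) i) (l i) < \<epsilon>)"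
    by (rule compact_lemma_general[where unproj = "\<lambda>e. e"]) (use fin bnd in auto)
  then obtain l r where r: "strict_mono r"
    and ev: "\<forall>\<epsilon>>0. \<forall>\<^sub>F n in sequentially. \<forall>i\<in>E. dist_class.dist (v (r n) i) (l i) < \<epsilon>"
    by auto
  define \<pi> where "\<pi> = (\<lambda>y. if y \<in> E then l y else 0)"
  have lim: "(\<lambda>n. v (r n) y) \<longlonglongrightarrow> \<pi> y" for y
  proof (cases "y \<in> E")
    case True
    show ?thesis
      unfolding \<pi>_def using True
    proof (intro tendstoI)
      fix e :: real assume "0 < e"
      then have "\<forall>\<^sub>F n in sequentially. \<forall>i\<in>E. dist_class.dist (v (r n) i) (l i) < e" using ev by auto
      then show "\<forall>\<^sub>F n in sequentially. dist_class.dist (v (r n) y) (if y \<in> E then l y else 0) < e"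
        by (rule eventually_mono) (use True in auto)
    qed
  next
    case False
    then show ?thesis using prob by (simp add: \<pi>_def prob_vector_def)
  qed
  have nn: "0 \<le> \<pi> y" for y
    by (rule LIMSEQ_le_const[OF lim[of y]]) (use prob in \<open>auto simp: prob_vector_def\<close>)
  have "(\<lambda>n. sum (v (r n)) E) \<longlonglongrightarrow> sum \<pi> E" by (intro tendsto_sum lim)
  moreover have "(\<lambda>n. sum (v (r n)) E) = (\<lambda>n. 1)" using prob by (simp add: prob_vector_def)
  ultimately have "sum \<pi> E = 1" using LIMSEQ_unique tendsto_const by metis
  then have "prob_vector E \<pi>" unfolding prob_vector_def using nn by (simp add: \<pi>_def)
  then show ?thesis using that r lim by blast
qed

lemma approx_stationary_limit_point:
  assumes fin: "finite E"
    and prob: "\<forall>n. prob_vector E (v n)"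
    and near: "\<forall>y\<in>E. (\<lambda>n. kernel_apply E K (v n) y - v n y) \<longlonglongrightarrow> 0"
  shows "\<exists>r \<pi>. strict_mono r \<and> stationary_vector E K \<pi> \<and> (\<forall>y. (\<lambda>n. v (r n) y) \<longlonglongrightarrow> \<pi> y)"
proof -
  obtain r \<pi> where r: "strict_mono r" and prob_\<pi>: "prob_vector E \<pi>"
    and lim: "\<And>y. (\<lambda>n. v (r n) y) \<longlonglongrightarrow> \<pi> y"
    using prob_vector_convergent_subseq[OF fin prob] by blast
  have "kernel_apply E K \<pi> y = \<pi> y" if y: "y \<in> E" for y
  proof -
    have "(\<lambda>n. kernel_apply E K (v (r n)) y - v (r n) y) \<longlonglongrightarrow> kernel_apply E K \<pi> y - \<pi> y"
      unfolding kernel_apply_def by (intro tendsto_diff tendsto_sum tendsto_mult_right lim)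
    moreover have "(\<lambda>n. kernel_apply E K (v (r n)) y - v (r n) y) \<longlonglongrightarrow> 0"
      using LIMSEQ_subseq_LIMSEQ[OF near[rule_format, OF y] r] by (simp add: o_def)
    ultimately show ?thesis using LIMSEQ_unique by fastforce
  qed
  then have "stationary_vector E K \<pi>" using prob_\<pi> by (simp add: stationary_vector_def)
  then show ?thesis using r lim by blast
qed

text \<open>With a unique stationary vector every subsequence has a further subsequence converging to
  it, so the whole sequence converges.\<close>

lemma approx_stationary_tendsto:
  assumes fin: "finite E" and cl: "closed_kernel E K"
    and reach: "\<forall>x\<in>E. (x, z) \<in> (support_rel K)\<^sup>*"
    and prob: "\<forall>n. prob_vector E (v n)"
    and near: "\<forall>y\<in>E. (\<lambda>n. kernel_apply E K (v n) y - v n y) \<longlonglongrightarrow> 0"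
    and st: "stationary_vector E K \<pi>"
  shows "(\<lambda>n. v n y) \<longlonglongrightarrow> \<pi> y"
proof (rule ccontr)
  assume "\<not> (\<lambda>n. v n y) \<longlonglongrightarrow> \<pi> y"
  then obtain e where e: "e > 0" and ne: "\<not> eventually (\<lambda>n. dist_class.dist (v n y) (\<pi> y) < e) sequentially"
    unfolding tendsto_iff by auto
  obtain s :: "nat \<Rightarrow> nat" where s: "strict_mono s" and far: "\<forall>n. \<not> dist_class.dist (v (s n) y) (\<pi> y) < e"
    using not_eventually_sequentiallyD[OF ne] by blast
  have near': "\<forall>y\<in>E. (\<lambda>n. kernel_apply E K ((v \<circ> s) n) y - (v \<circ> s) n y) \<longlonglongrightarrow> 0"
    using near LIMSEQ_subseq_LIMSEQ[OF _ s] by (auto simp: o_def)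
  obtain r' \<pi>' where st': "stationary_vector E K \<pi>'" and lim': "\<forall>y. (\<lambda>n. (v \<circ> s) (r' n) y) \<longlonglongrightarrow> \<pi>' y"
    using approx_stationary_limit_point[OF fin _ near'] prob by auto
  have "\<pi>' = \<pi>" by (rule stationary_vector_unique[OF fin cl reach st' st])
  then have "\<forall>\<^sub>F n in sequentially. dist_class.dist (v (s (r' n)) y) (\<pi> y) < e"
    using lim' e unfolding tendsto_iff by auto
  then show False using far by (auto simp: eventually_sequentially)
qed

text \<open>The Cesaro averages of the iterates of a point mass are approximately stationary.\<close>

lemma stationary_vector_exists:
  assumes fin: "finite E" and cl: "closed_kernel E K" and x0: "x0 \<in> E"
  shows "\<exists>\<pi>. stationary_vector E K \<pi>"
proof -
  define q where "q = (\<lambda>k. ((\<lambda>q. bind_pmf q K) ^^ k) (return_pmf x0))"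
  have q_Suc: "q (Suc k) = bind_pmf (q k) K" for k by (simp add: q_def)
  have qE: "set_pmf (q k) \<subseteq> E" for k
    by (induction k) (use x0 cl in \<open>auto simp: q_def closed_kernel_def\<close>)
  define v where "v = (\<lambda>n y. (\<Sum>k<Suc n. pmf (q k) y) / real (Suc n))"
  have prob: "prob_vector E (v n)" for n
  proof -
    have "sum (v n) E = (\<Sum>k<Suc n. \<Sum>y\<in>E. pmf (q k) y) / real (Suc n)"
      unfolding v_def by (subst sum.swap) (simp add: sum_divide_distrib)
    also have "\<dots> = 1" using fin qE by (simp add: sum_pmf_eq_1)
    moreover have "pmf (q k) x = 0" if "x \<notin> E" for k x
      using qE that by (meson pmf_eq_0_set_pmf subsetD)
    ultimately show ?thesis unfolding prob_vector_def by (auto simp: v_def sum_nonneg)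
  qed
  have near: "(\<lambda>n. kernel_apply E K (v n) y - v n y) \<longlonglongrightarrow> 0" for y
  proof -
    have avg: "kernel_apply E K (v n) y = (\<Sum>k<Suc n. pmf (q (Suc k)) y) / real (Suc n)" for n
    proof -
      have "kernel_apply E K (v n) y = (\<Sum>k<Suc n. kernel_apply E K (pmf (q k)) y) / real (Suc n)"
        unfolding v_def kernel_apply_def
        by (subst sum.swap) (simp only: sum_divide_distrib[symmetric] divide_inverse sum_distrib_right
            mult.assoc mult.commute[of "inverse _"])
      then show ?thesis by (simp add: kernel_apply_pmf[OF fin qE] q_Suc)
    qed
    have tele: "(\<Sum>k<Suc n. pmf (q (Suc k)) y) - (\<Sum>k<Suc n. pmf (q k) y) = pmf (q (Suc n)) y - pmf (q 0) y"
      for n by (simp only: sum_subtractf[symmetric]) (rule sum_lessThan_telescope)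
    have eq: "kernel_apply E K (v n) y - v n y = (pmf (q (Suc n)) y - pmf (q 0) y) / real (Suc n)" for n
      unfolding avg by (simp only: v_def diff_divide_distrib[symmetric] tele)
    have "\<bar>pmf (q (Suc n)) y - pmf (q 0) y\<bar> \<le> 1" for n
      using pmf_le_1 pmf_nonneg by (smt (verit))
    then show ?thesis
      unfolding eq
      by (intro Lim_null_comparison[OF _ LIMSEQ_inverse_real_of_nat] always_eventually allI)
         (simp add: divide_simps)
  qed
  show ?thesis using approx_stationary_limit_point[OF fin] prob near by blast
qed

section \<open>The chain of a single player\<close>

lemma UD_in_actions: "u \<in> UD S A c \<Longrightarrow> s \<in> S c \<Longrightarrow> u s \<in> A c s"
  by (auto simp: UD_def PiE_def Pi_def)

lemma in_Acl: "s \<in> S c \<Longrightarrow> a \<in> A c s \<Longrightarrow> a \<in> Acl S A c"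
  by (auto simp: Acl_def)

lemma closed_kernel_policy:
  assumes "\<forall>c. \<forall>s\<in>S c. \<forall>a\<in>A c s. set_pmf (phi c s a) \<subseteq> S c" and "u \<in> UD S A c"
  shows "closed_kernel (S c) (\<lambda>s. phi c s (u s))"
  using assms(1) UD_in_actions[OF assms(2)] by (auto simp: closed_kernel_def)

lemma stationary_dist_iff_stationary_vector:
  assumes lam: "0 < lam c" and fin: "finite (S c)"
  shows "stationary_dist S phi lam c u \<eta> \<longleftrightarrow> stationary_vector (S c) (\<lambda>s. phi c s (u s)) \<eta>"
proof -
  have "(\<Sum>s'\<in>S c. \<eta> s' * (lam c * (pmf (phi c s' (u s')) s - (if s' = s then 1 else 0))))
      = lam c * (kernel_apply (S c) (\<lambda>s. phi c s (u s)) \<eta> s - \<eta> s)" if "s \<in> S c" for s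
  proof -
    have "(\<Sum>s'\<in>S c. \<eta> s' * (lam c * (pmf (phi c s' (u s')) s - (if s' = s then 1 else 0))))
        = lam c * (\<Sum>s'\<in>S c. \<eta> s' * pmf (phi c s' (u s')) s) - lam c * (\<Sum>s'\<in>S c. (if s' = s then \<eta> s' else 0))"
      by (simp add: sum_distrib_left sum_subtractf[symmetric] algebra_simps if_distrib cong: if_cong)
    also have "(\<Sum>s'\<in>S c. (if s' = s then \<eta> s' else 0)) = \<eta> s"
      using that fin by (simp add: sum.delta')
    finally show ?thesis by (simp add: kernel_apply_def algebra_simps)
  qed
  then show ?thesis
    unfolding stationary_dist_def stationary_vector_def prob_vector_def using lam by auto
qed

text \<open>A state reachable from \<open>s\<close> whose own reachable set has minimal size generates a
  closed communicating class.\<close>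

lemma reachable_recurrent_class:
  assumes kernel: "\<forall>c. \<forall>s\<in>S c. \<forall>a\<in>A c s. set_pmf (phi c s a) \<subseteq> S c"
    and u: "u \<in> UD S A c" and fin: "finite (S c)" and s: "s \<in> S c"
  obtains y where "(s, y) \<in> (step_rel S phi c u)\<^sup>*"
    and "recurrent_class S phi c u {t. (y, t) \<in> (step_rel S phi c u)\<^sup>*}"
proof -
  let ?R = "step_rel S phi c u"
  define Reach where "Reach = (\<lambda>s. {t. (s, t) \<in> ?R\<^sup>*})"
  have step_in_S: "t' \<in> S c" if "(t, t') \<in> ?R" for t t'
    using that kernel UD_in_actions[OF u] by (auto simp: step_rel_def pmf_positive_iff)
  have "t \<in> S c" if "(s, t) \<in> ?R\<^sup>*" "s \<in> S c" for s t
    using that by (induction rule: rtrancl_induct) (auto intro: step_in_S)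
  then have Reach_S: "Reach s \<subseteq> S c" if "s \<in> S c" for s
    using that by (auto simp: Reach_def)
  obtain y where y: "y \<in> Reach s" and ymin: "\<forall>t\<in>Reach s. card (Reach y) \<le> card (Reach t)"
    using ex_has_least_nat[of "\<lambda>t. t \<in> Reach s" s "\<lambda>t. card (Reach t)"] by (auto simp: Reach_def)
  have yS: "y \<in> S c" using y Reach_S[OF s] by auto
  have reach_back: "y \<in> Reach t" if t: "t \<in> Reach y" for t
  proof -
    have sub: "Reach t \<subseteq> Reach y" using t by (auto simp: Reach_def)
    have "t \<in> Reach s" using t y by (auto simp: Reach_def)
    then have "card (Reach y) \<le> card (Reach t)" using ymin by auto
    moreover have "finite (Reach y)" using Reach_S[OF yS] fin by (auto intro: finite_subset)
    ultimately have "Reach t = Reach y" using sub by (meson card_seteq)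
    then show ?thesis by (auto simp: Reach_def)
  qed
  have "recurrent_class S phi c u (Reach y)"
    unfolding recurrent_class_def using Reach_S[OF yS] reach_back
    by (auto simp: Reach_def intro: rtrancl_trans)
  then show ?thesis using that y by (simp add: Reach_def)
qed

lemma A2_common_reachable_state:
  assumes kernel: "\<forall>c. \<forall>s\<in>S c. \<forall>a\<in>A c s. set_pmf (phi c s a) \<subseteq> S c"
    and u: "u \<in> UD S A c" and fin: "finite (S c)" and A2: "assumption_A2 S A phi"
  shows "\<exists>z\<in>S c. \<forall>s\<in>S c. (s, z) \<in> (support_rel (\<lambda>s. phi c s (u s)))\<^sup>*"
proof -
  let ?R = "step_rel S phi c u"
  obtain R0 where R0: "recurrent_class S phi c u R0"
    and uniq: "\<And>R. recurrent_class S phi c u R \<Longrightarrow> R = R0"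
    using A2 u unfolding assumption_A2_def by metis
  obtain z where z: "z \<in> R0" using R0 unfolding recurrent_class_def by blast
  have "(s, z) \<in> ?R\<^sup>*" if s: "s \<in> S c" for s
  proof -
    obtain y where "(s, y) \<in> ?R\<^sup>*" and "recurrent_class S phi c u {t. (y, t) \<in> ?R\<^sup>*}"
      using reachable_recurrent_class[OF kernel u fin s] .
    then have "(s, y) \<in> ?R\<^sup>*" and "y \<in> R0" using uniq by auto
    then show ?thesis using R0 z unfolding recurrent_class_def by (meson rtrancl_trans)
  qed
  moreover have "?R \<subseteq> support_rel (\<lambda>s. phi c s (u s))"
    by (auto simp: step_rel_def support_rel_def pmf_positive_iff)
  moreover have "z \<in> S c" using R0 z unfolding recurrent_class_def by blast
  ultimately show ?thesis using rtrancl_mono by blast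
qed

lemma eta_stationary:
  assumes kernel: "\<forall>c. \<forall>s\<in>S c. \<forall>a\<in>A c s. set_pmf (phi c s a) \<subseteq> S c"
    and u: "u \<in> UD S A c" and fin: "finite (S c)"
    and A2: "assumption_A2 S A phi" and ne: "S c \<noteq> {}" and lam: "0 < lam c"
  shows "stationary_vector (S c) (\<lambda>s. phi c s (u s)) (eta S phi lam c u)"
proof -
  have cl: "closed_kernel (S c) (\<lambda>s. phi c s (u s))" by (rule closed_kernel_policy[OF kernel u])
  obtain \<pi> where st: "stationary_vector (S c) (\<lambda>s. phi c s (u s)) \<pi>"
    using stationary_vector_exists[OF fin cl] ne by blast
  obtain z where reach: "\<forall>s\<in>S c. (s, z) \<in> (support_rel (\<lambda>s. phi c s (u s)))\<^sup>*"
    using A2_common_reachable_state[OF kernel u fin A2] by auto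
  have "stationary_dist S phi lam c u \<eta> \<longleftrightarrow> \<eta> = \<pi>" for \<eta>
    using st stationary_vector_unique[OF fin cl reach _ st]
    unfolding stationary_dist_iff_stationary_vector[of lam c S phi u, OF lam fin] by blast
  then have "eta S phi lam c u = \<pi>" unfolding eta_def by (intro the_equality) auto
  then show ?thesis using st by simp
qed

section \<open>The jump chain of the \<open>N\<close>-player game\<close>

lemma pmf_embed_pmf_prob_vector:
  assumes "prob_vector B f" "finite B"
  shows "pmf (embed_pmf f) x = f x"
proof (rule pmf_embed_pmf)
  have "(\<integral>\<^sup>+ x. ennreal (f x) \<partial>count_space UNIV) = (\<integral>\<^sup>+ x. ennreal (f x) \<partial>count_space B)"
    using assms by (subst nn_integral_count_space_indicator)
      (auto intro!: nn_integral_cong simp: prob_vector_def indicator_def)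
  also have "\<dots> = ennreal (sum f B)"
    using assms by (simp add: nn_integral_count_space_finite sum_ennreal prob_vector_def)
  finally show "(\<integral>\<^sup>+ x. ennreal (f x) \<partial>count_space UNIV) = 1"
    using assms by (simp add: prob_vector_def)
qed (use assms in \<open>simp add: prob_vector_def\<close>)

lemma pmf_map_pair_const:
  "pmf (map_pmf (\<lambda>z. (z, c)) M) (y, t) = (if t = c then pmf M y else 0)"
proof -
  have "(\<lambda>z. (z, c)) -` {(y, t)} = (if t = c then {y} else {})" by auto
  then show ?thesis by (simp add: pmf_map measure_pmf_single)
qed

locale jump_chain =
  fixes N :: nat and cl :: "nat \<Rightarrow> 'c" and lam :: "'c \<Rightarrow> real"
    and phi :: "'c \<Rightarrow> 's \<Rightarrow> 'a \<Rightarrow> 's pmf" and p :: "nat \<Rightarrow> 's \<Rightarrow> 'a" and i :: nat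
    and S :: "'c \<Rightarrow> 's set"
  assumes i_lt_N: "i < N" and rates_pos: "\<forall>c. 0 < lam c"
    and policy_closed: "\<forall>j<N. \<forall>s\<in>S (cl j). set_pmf (phi (cl j) s (p j s)) \<subseteq> S (cl j)"
    and finite_S: "\<forall>c. finite (S c)"
begin

definition "total_rate = (\<Sum>l<N. lam (cl l))"
definition "ring_prob j = (if j < N then lam (cl j) / total_rate else 0)"
definition "configs = PiE {..<N} (\<lambda>j. S (cl j))"
definition "trunc x = restrict x {..<N}"
definition "move j x = map_pmf (\<lambda>s'. x(j := s')) (phi (cl j) (x j) (p j (x j)))"
definition "jump x = bind_pmf (sel N cl lam) (\<lambda>j. move j x)"
abbreviation "kstep_i \<equiv> kstep N cl lam phi p i"

lemma N_pos: "0 < N"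
  using i_lt_N by simp

lemma total_rate_pos: "0 < total_rate"
  unfolding total_rate_def using N_pos rates_pos by (intro sum_pos) auto

lemma ring_prob_nonneg: "0 \<le> ring_prob j" using total_rate_pos rates_pos by (simp add: ring_prob_def less_imp_le)

lemma ring_prob_pos: "j < N \<Longrightarrow> 0 < ring_prob j" using total_rate_pos rates_pos by (simp add: ring_prob_def)

lemma sum_ring_prob: "(\<Sum>j<N. ring_prob j) = 1"
  using total_rate_pos by (simp add: ring_prob_def sum_divide_distrib[symmetric] total_rate_def)

lemma pmf_sel: "pmf (sel N cl lam) j = ring_prob j"
proof -
  have "(\<lambda>j. if j < N then lam (cl j) / (\<Sum>l<N. lam (cl l)) else 0) = ring_prob"
    by (auto simp: ring_prob_def total_rate_def)
  then have "sel N cl lam = embed_pmf ring_prob" by (simp add: sel_def)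
  moreover have "prob_vector {..<N} ring_prob"
    using ring_prob_nonneg sum_ring_prob by (simp add: prob_vector_def ring_prob_def)
  ultimately show ?thesis by (simp add: pmf_embed_pmf_prob_vector)
qed

lemma set_sel: "set_pmf (sel N cl lam) = {..<N}"
proof -
  have "set_pmf (sel N cl lam) = {j. ring_prob j \<noteq> 0}"
    using set_pmf_eq[of "sel N cl lam"] pmf_sel by auto
  also have "\<dots> = {..<N}" using ring_prob_pos rates_pos total_rate_pos by (auto simp: ring_prob_def) (metis less_irrefl)
  finally show ?thesis .
qed

lemma finite_configs: "finite configs" unfolding configs_def using finite_S by (intro finite_PiE) auto

lemma configs_upd: "x \<in> configs \<Longrightarrow> j < N \<Longrightarrow> s \<in> S (cl j) \<Longrightarrow> x(j := s) \<in> configs"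
  unfolding configs_def by (auto simp: PiE_iff extensional_def)

lemma set_move: "x \<in> configs \<Longrightarrow> j < N \<Longrightarrow> set_pmf (move j x) \<subseteq> configs"
proof -
  assume x: "x \<in> configs" and j: "j < N"
  have "x j \<in> S (cl j)" using x j by (auto simp: configs_def PiE_iff)
  then have "set_pmf (phi (cl j) (x j) (p j (x j))) \<subseteq> S (cl j)" using policy_closed j by auto
  then show ?thesis using x j configs_upd by (auto simp: move_def)
qed

lemma closed_kernel_jump: "closed_kernel configs jump"
  unfolding closed_kernel_def jump_def using set_move set_sel by auto

lemma pmf_jump: "pmf (jump x) y = (\<Sum>j<N. ring_prob j * pmf (move j x) y)"
proof -
  have "pmf (jump x) y = (\<Sum>j<N. pmf (move j x) y * pmf (sel N cl lam) j)"
    unfolding jump_def pmf_bind by (rule integral_measure_pmf_real) (auto simp: set_sel)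
  then show ?thesis by (simp add: pmf_sel mult.commute)
qed

lemma trunc_upd: "j < N \<Longrightarrow> trunc (x(j := s)) = (trunc x)(j := s)"
  by (auto simp: trunc_def restrict_def)

lemma trunc_apply: "j < N \<Longrightarrow> trunc x j = x j"
  by (simp add: trunc_def)

lemma kstep_trunc: "map_pmf (apfst trunc) (kstep_i (x, k)) = kstep_i (trunc x, k)"
proof -
  have "map_pmf (apfst trunc) (kstep_i (x, k)) =
     bind_pmf (sel N cl lam) (\<lambda>j. map_pmf (\<lambda>s'. (trunc (x(j := s')), if j = i then Suc k else k)) (phi (cl j) (x j) (p j (x j))))"
    unfolding kstep_def fst_conv snd_conv by (simp add: map_bind_pmf map_pmf_comp)
  also have "\<dots> = kstep_i (trunc x, k)"
    unfolding kstep_def by (intro bind_pmf_cong refl) (auto simp: set_sel trunc_upd trunc_apply)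
  finally show ?thesis .
qed

lemma dist_trunc: "map_pmf (apfst trunc) (dist N cl lam phi p i init n) = dist N cl lam phi p i (map_pmf trunc init) n"
proof (induction n)
  case 0
  then show ?case by (simp add: dist_def map_pmf_comp)
next
  case (Suc n)
  have "map_pmf (apfst trunc) (dist N cl lam phi p i init (Suc n))
      = bind_pmf (dist N cl lam phi p i init n) (\<lambda>xk. map_pmf (apfst trunc) (kstep_i xk))"
    by (simp add: dist_def map_bind_pmf)
  also have "\<dots> = bind_pmf (dist N cl lam phi p i init n) (\<lambda>xk. kstep_i (apfst trunc xk))"
    by (intro bind_pmf_cong refl) (metis kstep_trunc apfst_conv prod.collapse)
  also have "\<dots> = bind_pmf (map_pmf (apfst trunc) (dist N cl lam phi p i init n)) kstep_i"
    by (simp add: bind_map_pmf)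
  also have "\<dots> = dist N cl lam phi p i (map_pmf trunc init) (Suc n)"
    using Suc by (simp add: dist_def)
  finally show ?case .
qed

lemma dist_Suc: "dist N cl lam phi p i init (Suc n) = bind_pmf (dist N cl lam phi p i init n) kstep_i"
  by (simp add: dist_def)

lemma set_dist:
  assumes "set_pmf init \<subseteq> configs"
  shows "set_pmf (dist N cl lam phi p i init n) \<subseteq> configs \<times> {..n}"
proof (induction n)
  case 0 then show ?case using assms by (auto simp: dist_def)
next
  case (Suc n)
  show ?case
  proof
    fix yt assume "yt \<in> set_pmf (dist N cl lam phi p i init (Suc n))"
    then obtain x k j s' where xk: "(x, k) \<in> set_pmf (dist N cl lam phi p i init n)" and j: "j < N"
      and s': "s' \<in> set_pmf (phi (cl j) (x j) (p j (x j)))"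
      and yt: "yt = (x(j := s'), if j = i then Suc k else k)"
      by (auto simp: dist_Suc kstep_def set_sel)
    have "x \<in> configs" "k \<le> n" using xk Suc by auto
    moreover have "x j \<in> S (cl j)" using \<open>x \<in> configs\<close> j by (auto simp: configs_def PiE_iff)
    moreover have "s' \<in> S (cl j)" using policy_closed j \<open>x j \<in> S (cl j)\<close> s' by auto
    ultimately show "yt \<in> configs \<times> {..Suc n}" using yt configs_upd[of x j s'] j by auto
  qed
qed

lemma pmf_kstep:
  "pmf (kstep_i (x, k)) (y, t) = (\<Sum>j<N. ring_prob j * (if t = (if j = i then Suc k else k) then pmf (move j x) y else 0))"
proof -
  have eq: "map_pmf (\<lambda>s'. (x(j := s'), if j = i then Suc k else k)) (phi (cl j) (x j) (p j (x j)))
      = map_pmf (\<lambda>z. (z, if j = i then Suc k else k)) (move j x)" for j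
    by (simp add: move_def map_pmf_comp)
  have "pmf (kstep_i (x, k)) (y, t)
      = (\<Sum>j<N. pmf (map_pmf (\<lambda>z. (z, if j = i then Suc k else k)) (move j x)) (y, t) * pmf (sel N cl lam) j)"
    unfolding kstep_def pmf_bind fst_conv snd_conv eq
    by (rule integral_measure_pmf_real) (auto simp: set_sel)
  then show ?thesis by (simp add: pmf_sel pmf_map_pair_const mult.commute)
qed

definition "reward_i (r :: 'c \<Rightarrow> 's \<Rightarrow> 'a \<Rightarrow> ('c \<Rightarrow> 's \<Rightarrow> 'a \<Rightarrow> real) \<Rightarrow> real) x =
  r (cl i) (x i) (p i (x i)) (emp N cl p x)"

definition "ring_reward r T = (\<lambda>((x, k), j). if j = i \<and> k < T then reward_i r x else 0)"

lemma emp_trunc: "emp N cl p (trunc x) = emp N cl p x"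
proof -
  have "{j. j < N \<and> cl j = c \<and> trunc x j = s \<and> p j (trunc x j) = a}
      = {j. j < N \<and> cl j = c \<and> x j = s \<and> p j (x j) = a}" for c s a
    by (auto simp: trunc_apply)
  then show ?thesis by (simp add: emp_def fun_eq_iff)
qed

lemma reward_i_trunc: "reward_i r (trunc x) = reward_i r x"
  by (simp add: reward_i_def emp_trunc trunc_apply i_lt_N)

lemma reward_upto_ring_reward:
  "reward_upto N cl lam phi r p init i T
     = (\<Sum>n. measure_pmf.expectation (pair_pmf (dist N cl lam phi p i init n) (sel N cl lam)) (ring_reward r T))"
  unfolding reward_upto_def ring_reward_def reward_i_def ..

lemma expectation_trunc:
  "measure_pmf.expectation (pair_pmf (dist N cl lam phi p i init n) (sel N cl lam)) (ring_reward r T)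
   = measure_pmf.expectation (pair_pmf (dist N cl lam phi p i (map_pmf trunc init) n) (sel N cl lam)) (ring_reward r T)"
proof -
  have "measure_pmf.expectation (pair_pmf (dist N cl lam phi p i init n) (sel N cl lam)) (ring_reward r T)
      = measure_pmf.expectation (pair_pmf (dist N cl lam phi p i init n) (sel N cl lam)) (\<lambda>z. ring_reward r T (apfst (apfst trunc) z))"
    by (intro Bochner_Integration.integral_cong refl) (auto simp: ring_reward_def reward_i_trunc split: prod.splits)
  also have "\<dots> = measure_pmf.expectation (map_pmf (apfst (apfst trunc)) (pair_pmf (dist N cl lam phi p i init n) (sel N cl lam))) (ring_reward r T)"
    by (subst integral_map_pmf) (rule refl)
  also have "map_pmf (apfst (apfst trunc)) (pair_pmf (dist N cl lam phi p i init n) (sel N cl lam))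
       = pair_pmf (dist N cl lam phi p i (map_pmf trunc init) n) (sel N cl lam)"
    by (simp add: pair_map_pmf1[symmetric] dist_trunc)
  finally show ?thesis .
qed

end

section \<open>Long-run payoffs as stationary expectations\<close>

lemma sum_atMost_if_mem:
  fixes f :: "nat \<Rightarrow> real"
  assumes z: "\<forall>k>n. f k = 0" and fin: "finite B"
  shows "(\<Sum>k\<le>n. (if k \<in> B then f k else 0)) = sum f B"
proof -
  have "(\<Sum>k\<le>n. (if k \<in> B then f k else 0)) = sum f ({..n} \<inter> B)"
    by (simp add: sum.inter_restrict[symmetric])
  also have "\<dots> = sum f B"
    using z fin by (intro sum.mono_neutral_left) (auto, meson not_le)
  finally show ?thesis .
qed

locale jump_chain_init = jump_chain +
  fixes init0
  assumes init0_configs: "set_pmf init0 \<subseteq> configs"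
begin

text \<open>\<open>joint n x k\<close> is the probability that after \<open>n\<close> rings the configuration is \<open>x\<close> and player
  \<open>i\<close> has rung \<open>k\<close> times; \<open>occupation T x\<close> below is the expected number of rings before the
  \<open>T\<close>-th ring of \<open>i\<close> at which the configuration is \<open>x\<close>.\<close>

definition "law n = dist N cl lam phi p i init0 n"
definition "joint n x k = pmf (law n) (x, k)"
definition "joint_below T n x = (\<Sum>t<T. joint n x t)"
definition "count_prob n t = (\<Sum>x\<in>configs. joint n x t)"
definition "last_ring T n y = (\<Sum>x\<in>configs. joint n x (T - 1) * (ring_prob i * pmf (move i x) y))"

lemma set_law: "set_pmf (law n) \<subseteq> configs \<times> {..n}"
  unfolding law_def by (rule set_dist[OF init0_configs])

lemma joint_nonneg: "0 \<le> joint n x k" by (simp add: joint_def)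

lemma joint_zero_count: "n < k \<Longrightarrow> joint n x k = 0"
  using set_law[of n] by (auto simp: joint_def pmf_eq_0_set_pmf)

lemma joint_zero_config: "x \<notin> configs \<Longrightarrow> joint n x k = 0"
  using set_law[of n] by (auto simp: joint_def pmf_eq_0_set_pmf)

lemma joint_0: "joint 0 x k = (if k = 0 then pmf init0 x else 0)"
  by (simp add: joint_def law_def dist_def pmf_map_pair_const)

lemma joint_Suc: "joint (Suc n) y t = (\<Sum>x\<in>configs. \<Sum>k\<le>n. joint n x k * pmf (kstep_i (x, k)) (y, t))"
proof -
  have "joint (Suc n) y t = (\<Sum>xk\<in>configs \<times> {..n}. pmf (kstep_i xk) (y, t) * pmf (law n) xk)"
    unfolding joint_def law_def dist_Suc pmf_bind
    by (rule integral_measure_pmf_real) (use set_law[of n] finite_configs in \<open>auto simp: law_def\<close>)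
  also have "\<dots> = (\<Sum>(x, k)\<in>configs \<times> {..n}. joint n x k * pmf (kstep_i (x, k)) (y, t))"
    by (intro sum.cong) (auto simp: joint_def)
  also have "\<dots> = (\<Sum>x\<in>configs. \<Sum>k\<le>n. joint n x k * pmf (kstep_i (x, k)) (y, t))"
    by (rule sum.cartesian_product[symmetric])
  finally show ?thesis .
qed

lemma sum_pmf_move: "x \<in> configs \<Longrightarrow> j < N \<Longrightarrow> (\<Sum>y\<in>configs. pmf (move j x) y) = 1"
  using set_move finite_configs by (simp add: sum_pmf_eq_1)

lemma ring_split:
  assumes T: "1 \<le> T"
  shows "(\<Sum>j<N. ring_prob j * (if (if j = i then Suc k else k) < T then pmf (move j x) y else 0))
       = (if k < T then pmf (jump x) y else 0) - (if k = T - 1 then ring_prob i * pmf (move i x) y else 0)"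
proof -
  have iN: "i \<in> {..<N}" using i_lt_N by simp
  have "(\<Sum>j<N. ring_prob j * (if (if j = i then Suc k else k) < T then pmf (move j x) y else 0))
      = ring_prob i * (if Suc k < T then pmf (move i x) y else 0) + (\<Sum>j\<in>{..<N} - {i}. ring_prob j * (if k < T then pmf (move j x) y else 0))"
    by (subst sum.remove[OF _ iN]) (auto intro!: sum.cong)
  moreover have "(\<Sum>j<N. ring_prob j * (if k < T then pmf (move j x) y else 0))
      = ring_prob i * (if k < T then pmf (move i x) y else 0) + (\<Sum>j\<in>{..<N} - {i}. ring_prob j * (if k < T then pmf (move j x) y else 0))"
    by (subst sum.remove[OF _ iN]) auto
  moreover have "(\<Sum>j<N. ring_prob j * (if k < T then pmf (move j x) y else 0)) = (if k < T then pmf (jump x) y else 0)"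
    by (simp add: pmf_jump)
  ultimately show ?thesis using T by (auto simp: algebra_simps)
qed

lemma joint_below_Suc_expand:
  "joint_below T (Suc n) y = (\<Sum>x\<in>configs. \<Sum>k\<le>n. joint n x k *
     (\<Sum>j<N. ring_prob j * (if (if j = i then Suc k else k) < T then pmf (move j x) y else 0)))"
proof -
  have swap: "(\<Sum>t<T. \<Sum>x\<in>configs. \<Sum>k\<le>n. F t x k) = (\<Sum>x\<in>configs. \<Sum>k\<le>n. \<Sum>t<T. F t x k)"
    for F :: "nat \<Rightarrow> _ \<Rightarrow> nat \<Rightarrow> real"
    by (subst sum.swap) (simp only: sum.swap[of _ "{..<T}"])
  have inner: "(\<Sum>t<T. c * (\<Sum>j<N. ring_prob j * H j t)) = c * (\<Sum>j<N. ring_prob j * (\<Sum>t<T. H j t))"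
    for c and H :: "nat \<Rightarrow> nat \<Rightarrow> real"
    by (simp only: sum_distrib_left sum.swap[of _ "{..<T}"] mult.left_commute[of _ c])
  have delta: "(\<Sum>t<T. (if t = c then v else 0)) = (if c < T then v else (0::real))" for c v
    by (simp add: sum.delta')
  have "joint_below T (Suc n) y = (\<Sum>t<T. \<Sum>x\<in>configs. \<Sum>k\<le>n. joint n x k *
      (\<Sum>j<N. ring_prob j * (if t = (if j = i then Suc k else k) then pmf (move j x) y else 0)))"
    by (simp add: joint_below_def joint_Suc pmf_kstep)
  also have "\<dots> = (\<Sum>x\<in>configs. \<Sum>k\<le>n. joint n x k *
      (\<Sum>j<N. ring_prob j * (\<Sum>t<T. (if t = (if j = i then Suc k else k) then pmf (move j x) y else 0))))"
    by (simp only: swap inner)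
  finally show ?thesis by (simp only: delta)
qed

text \<open>One more ring moves the law of the configuration by the jump kernel, except for the mass
  that leaves the event of fewer than \<open>T\<close> rings of player \<open>i\<close> at the \<open>T\<close>-th ring of \<open>i\<close>.\<close>

lemma joint_below_Suc:
  assumes T: "1 \<le> T"
  shows "joint_below T (Suc n) y = kernel_apply configs jump (joint_below T n) y - last_ring T n y"
proof -
  have below: "(\<Sum>k\<le>n. (if k \<in> {..<T} then joint n x k else 0)) = joint_below T n x" for x
    unfolding joint_below_def by (rule sum_atMost_if_mem) (use joint_zero_count in auto)
  have last: "(\<Sum>k\<le>n. (if k \<in> {T - 1} then joint n x k else 0)) = joint n x (T - 1)" for x
    using sum_atMost_if_mem[of n "joint n x" "{T - 1}"] joint_zero_count by auto
  have "joint_below T (Suc n) y = (\<Sum>x\<in>configs. \<Sum>k\<le>n.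
      (if k \<in> {..<T} then joint n x k else 0) * pmf (jump x) y
      - (if k \<in> {T - 1} then joint n x k else 0) * (ring_prob i * pmf (move i x) y))"
    unfolding joint_below_Suc_expand ring_split[OF T]
    by (intro sum.cong refl) (auto simp: right_diff_distrib)
  also have "\<dots> = (\<Sum>x\<in>configs. joint_below T n x * pmf (jump x) y - joint n x (T - 1) * (ring_prob i * pmf (move i x) y))"
    by (simp only: sum_subtractf sum_distrib_right[symmetric] below last)
  also have "\<dots> = kernel_apply configs jump (joint_below T n) y - last_ring T n y"
    by (simp add: kernel_apply_def last_ring_def sum_subtractf)
  finally show ?thesis .
qed

definition "below_prob T n = (\<Sum>x\<in>configs. joint_below T n x)"

lemma count_prob_nonneg: "0 \<le> count_prob n t" by (simp add: count_prob_def sum_nonneg joint_nonneg)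
lemma joint_below_nonneg: "0 \<le> joint_below T n x" by (simp add: joint_below_def sum_nonneg joint_nonneg)
lemma below_prob_nonneg: "0 \<le> below_prob T n" by (simp add: below_prob_def sum_nonneg joint_below_nonneg)

lemma last_ring_nonneg: "0 \<le> last_ring T n y" unfolding last_ring_def using ring_prob_nonneg
  by (intro sum_nonneg mult_nonneg_nonneg joint_nonneg) auto

lemma last_ring_le: "last_ring T n y \<le> ring_prob i * count_prob n (T - 1)"
proof -
  have "last_ring T n y \<le> (\<Sum>x\<in>configs. joint n x (T - 1) * ring_prob i)"
    unfolding last_ring_def
    by (intro sum_mono mult_left_mono mult_left_le pmf_le_1 ring_prob_nonneg joint_nonneg)
  then show ?thesis by (simp add: count_prob_def sum_distrib_left mult.commute)
qed

lemma sum_last_ring: "(\<Sum>y\<in>configs. last_ring T n y) = ring_prob i * count_prob n (T - 1)"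
proof -
  have "(\<Sum>y\<in>configs. last_ring T n y) = (\<Sum>x\<in>configs. joint n x (T - 1) * ring_prob i * (\<Sum>y\<in>configs. pmf (move i x) y))"
    unfolding last_ring_def by (subst sum.swap) (simp add: sum_distrib_left mult.assoc)
  also have "\<dots> = (\<Sum>x\<in>configs. joint n x (T - 1) * ring_prob i)" using sum_pmf_move i_lt_N by simp
  finally show ?thesis by (simp add: count_prob_def sum_distrib_left mult.commute)
qed

lemma below_prob_Suc: "1 \<le> T \<Longrightarrow> below_prob T (Suc n) = below_prob T n - ring_prob i * count_prob n (T - 1)"
  unfolding below_prob_def using joint_below_Suc sum_kernel_apply[OF finite_configs closed_kernel_jump] sum_last_ring
  by (simp add: sum_subtractf)

lemma below_prob_0: "1 \<le> T \<Longrightarrow> below_prob T 0 = 1"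
proof -
  assume T: "1 \<le> T"
  have "joint_below T 0 x = pmf init0 x" for x
  proof -
    have "joint_below T 0 x = (\<Sum>t<T. if t = 0 then pmf init0 x else 0)" by (simp add: joint_below_def joint_0)
    also have "\<dots> = pmf init0 x" using T by (simp add: sum.delta)
    finally show ?thesis .
  qed
  then show ?thesis using init0_configs finite_configs by (simp add: below_prob_def sum_pmf_eq_1)
qed

lemma below_prob_eq: "below_prob T n = (\<Sum>t<T. count_prob n t)"
  unfolding below_prob_def joint_below_def count_prob_def by (rule sum.swap)

lemma count_prob_partial_sums: "ring_prob i * (\<Sum>n<K. count_prob n t) = 1 - below_prob (Suc t) K"
proof (induction K)
  case 0 then show ?case using below_prob_0[of "Suc t"] by simp
next
  case (Suc K)
  then show ?case using below_prob_Suc[of "Suc t" K] by (simp add: algebra_simps)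
qed

lemma ring_prob_i_pos: "0 < ring_prob i" using ring_prob_pos i_lt_N by simp

lemma count_prob_summable: "summable (\<lambda>n. count_prob n t)"
proof (rule summableI_nonneg_bounded)
  show "0 \<le> count_prob n t" for n by (rule count_prob_nonneg)
  show "sum (\<lambda>n. count_prob n t) {..<K} \<le> 1 / ring_prob i" for K
  proof -
    have "ring_prob i * (\<Sum>n<K. count_prob n t) \<le> 1" using count_prob_partial_sums[of t K] below_prob_nonneg[of "Suc t" K] by simp
    then show ?thesis using ring_prob_i_pos by (simp add: field_simps)
  qed
qed

lemma below_prob_tendsto_0: "(\<lambda>K. below_prob T K) \<longlonglongrightarrow> 0"
proof -
  have "(\<lambda>K. \<Sum>t<T. count_prob K t) \<longlonglongrightarrow> (\<Sum>t<T. 0)"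
    by (intro tendsto_sum summable_LIMSEQ_zero count_prob_summable)
  then show ?thesis by (simp add: below_prob_eq)
qed

lemma count_prob_suminf: "ring_prob i * (\<Sum>n. count_prob n t) = 1"
proof -
  have "(\<lambda>K. ring_prob i * (\<Sum>n<K. count_prob n t)) \<longlonglongrightarrow> ring_prob i * (\<Sum>n. count_prob n t)"
    by (intro tendsto_mult_left summable_LIMSEQ count_prob_summable)
  moreover have "(\<lambda>K. ring_prob i * (\<Sum>n<K. count_prob n t)) \<longlonglongrightarrow> 1 - 0"
    unfolding count_prob_partial_sums by (intro tendsto_diff tendsto_const below_prob_tendsto_0)
  ultimately show ?thesis using LIMSEQ_unique by fastforce
qed

lemma below_prob_summable: "summable (\<lambda>n. below_prob T n)"
  unfolding below_prob_eq by (intro summable_sum count_prob_summable)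

lemma joint_below_le_below_prob: "x \<in> configs \<Longrightarrow> joint_below T n x \<le> below_prob T n"
  unfolding below_prob_def using finite_configs joint_below_nonneg by (intro member_le_sum) auto

lemma joint_below_zero_config: "x \<notin> configs \<Longrightarrow> joint_below T n x = 0"
  by (simp add: joint_below_def joint_zero_config)

lemma joint_below_summable: "summable (\<lambda>n. joint_below T n x)"
proof (cases "x \<in> configs")
  case True
  show ?thesis
    by (rule summable_comparison_test[OF _ below_prob_summable]) (use joint_below_le_below_prob[OF True] joint_below_nonneg in auto)
next
  case False then show ?thesis by (simp add: joint_below_zero_config)
qed

definition "occupation T x = (\<Sum>n. joint_below T n x)"

lemma occupation_nonneg: "0 \<le> occupation T x" unfolding occupation_def by (intro suminf_nonneg joint_below_summable joint_below_nonneg)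

lemma occupation_zero: "x \<notin> configs \<Longrightarrow> occupation T x = 0" by (simp add: occupation_def joint_below_zero_config)

lemma sum_occupation: "(\<Sum>x\<in>configs. occupation T x) = real T / ring_prob i"
proof -
  have "(\<Sum>x\<in>configs. occupation T x) = (\<Sum>n. \<Sum>x\<in>configs. joint_below T n x)"
    unfolding occupation_def by (rule suminf_sum[symmetric]) (rule joint_below_summable)
  also have "\<dots> = (\<Sum>n. \<Sum>t<T. count_prob n t)" by (simp add: below_prob_def[symmetric] below_prob_eq)
  also have "\<dots> = (\<Sum>t<T. \<Sum>n. count_prob n t)" by (rule suminf_sum) (rule count_prob_summable)
  also have "\<dots> = (\<Sum>t<T. 1 / ring_prob i)"
    using count_prob_suminf ring_prob_i_pos by (intro sum.cong refl) (simp add: field_simps)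
  finally show ?thesis by simp
qed

lemma last_ring_summable: "summable (\<lambda>n. last_ring T n y)"
  by (rule summable_comparison_test[of _ "\<lambda>n. ring_prob i * count_prob n (T - 1)"])
     (use last_ring_nonneg last_ring_le in \<open>auto intro: summable_mult count_prob_summable\<close>)

definition "last_ring_total T y = (\<Sum>n. last_ring T n y)"

lemma last_ring_total_bounds: "0 \<le> last_ring_total T y \<and> last_ring_total T y \<le> 1"
proof
  show "0 \<le> last_ring_total T y" unfolding last_ring_total_def by (intro suminf_nonneg last_ring_summable last_ring_nonneg)
  have "last_ring_total T y \<le> (\<Sum>n. ring_prob i * count_prob n (T - 1))"
    unfolding last_ring_total_def by (intro suminf_le last_ring_le last_ring_summable summable_mult count_prob_summable)
  also have "\<dots> = 1" using count_prob_suminf by (simp add: suminf_mult count_prob_summable)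
  finally show "last_ring_total T y \<le> 1" .
qed

lemma joint_below_0_bounds: "0 \<le> joint_below T 0 y \<and> joint_below T 0 y \<le> 1"
proof
  show "0 \<le> joint_below T 0 y" by (rule joint_below_nonneg)
  have "joint_below T 0 y = (\<Sum>t<T. if t = 0 then pmf init0 y else 0)" by (simp add: joint_below_def joint_0)
  also have "\<dots> \<le> 1" by (simp add: sum.delta pmf_le_1)
  finally show "joint_below T 0 y \<le> 1" .
qed

lemma occupation_approx_stationary:
  assumes T: "1 \<le> T" and y: "y \<in> configs"
  shows "kernel_apply configs jump (occupation T) y - occupation T y = last_ring_total T y - joint_below T 0 y"
proof -
  have s1: "(\<lambda>n. joint_below T (Suc n) y) sums (occupation T y - joint_below T 0 y)"
    by (subst sums_Suc_iff) (simp add: occupation_def summable_sums joint_below_summable)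
  have s2: "(\<lambda>n. kernel_apply configs jump (joint_below T n) y - last_ring T n y) sums (kernel_apply configs jump (occupation T) y - last_ring_total T y)"
    unfolding kernel_apply_def last_ring_total_def
    by (intro sums_diff sums_sum sums_mult2 summable_sums last_ring_summable)
       (simp add: occupation_def summable_sums joint_below_summable)
  have "(\<lambda>n. joint_below T (Suc n) y) = (\<lambda>n. kernel_apply configs jump (joint_below T n) y - last_ring T n y)"
    using joint_below_Suc[OF T] by auto
  with s1 s2 have "occupation T y - joint_below T 0 y = kernel_apply configs jump (occupation T) y - last_ring_total T y"
    using sums_unique2 by metis
  then show ?thesis by simp
qed

lemma expectation_law:
  "measure_pmf.expectation (pair_pmf (law n) (sel N cl lam)) (ring_reward r T) = ring_prob i * (\<Sum>x\<in>configs. joint_below T n x * reward_i r x)"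
proof -
  have "measure_pmf.expectation (pair_pmf (law n) (sel N cl lam)) (ring_reward r T)
      = (\<Sum>z\<in>(configs \<times> {..n}) \<times> {..<N}. ring_reward r T z * pmf (pair_pmf (law n) (sel N cl lam)) z)"
    by (rule integral_measure_pmf_real) (use set_law[of n] finite_configs in \<open>auto simp: set_sel\<close>)
  also have "\<dots> = (\<Sum>xk\<in>configs \<times> {..n}. \<Sum>j<N. ring_reward r T (xk, j) * pmf (pair_pmf (law n) (sel N cl lam)) (xk, j))"
    by (simp add: sum.cartesian_product split_beta)
  also have "\<dots> = (\<Sum>(x, k)\<in>configs \<times> {..n}. \<Sum>j<N. ring_reward r T ((x, k), j) * (joint n x k * ring_prob j))"
    by (intro sum.cong refl) (auto simp: pmf_pair joint_def pmf_sel)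
  also have "\<dots> = (\<Sum>x\<in>configs. \<Sum>k\<le>n. (if k \<in> {..<T} then ring_prob i * reward_i r x * joint n x k else 0))"
  proof -
    have "(\<Sum>j<N. ring_reward r T ((x, k), j) * (joint n x k * ring_prob j))
        = (if k \<in> {..<T} then ring_prob i * reward_i r x * joint n x k else 0)" for x k
    proof -
      have "(\<Sum>j<N. ring_reward r T ((x, k), j) * (joint n x k * ring_prob j))
          = (\<Sum>j<N. if j = i then (if k < T then reward_i r x * (joint n x k * ring_prob j) else 0) else 0)"
        by (intro sum.cong refl) (auto simp: ring_reward_def)
      also have "\<dots> = (if k < T then reward_i r x * (joint n x k * ring_prob i) else 0)" using i_lt_N by (simp add: sum.delta)
      finally show ?thesis by auto
    qed
    then show ?thesis by (simp add: sum.cartesian_product[symmetric])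
  qed
  also have "\<dots> = (\<Sum>x\<in>configs. ring_prob i * reward_i r x * joint_below T n x)"
  proof (rule sum.cong[OF refl])
    fix x
    show "(\<Sum>k\<le>n. (if k \<in> {..<T} then ring_prob i * reward_i r x * joint n x k else 0)) = ring_prob i * reward_i r x * joint_below T n x"
      using sum_atMost_if_mem[of n "\<lambda>k. ring_prob i * reward_i r x * joint n x k" "{..<T}"] joint_zero_count
      by (simp add: joint_below_def sum_distrib_left)
  qed
  finally show ?thesis by (simp add: sum_distrib_left mult.commute mult.left_commute)
qed

lemma reward_law:
  "(\<Sum>n. measure_pmf.expectation (pair_pmf (law n) (sel N cl lam)) (ring_reward r T)) = ring_prob i * (\<Sum>x\<in>configs. occupation T x * reward_i r x)"
proof -
  have "(\<Sum>n. measure_pmf.expectation (pair_pmf (law n) (sel N cl lam)) (ring_reward r T))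
      = (\<Sum>n. ring_prob i * (\<Sum>x\<in>configs. joint_below T n x * reward_i r x))"
    by (simp add: expectation_law)
  also have "\<dots> = ring_prob i * (\<Sum>n. \<Sum>x\<in>configs. joint_below T n x * reward_i r x)"
    by (intro suminf_mult summable_sum summable_mult2 joint_below_summable)
  also have "(\<Sum>n. \<Sum>x\<in>configs. joint_below T n x * reward_i r x) = (\<Sum>x\<in>configs. \<Sum>n. joint_below T n x * reward_i r x)"
    by (intro suminf_sum summable_mult2 joint_below_summable)
  also have "\<dots> = (\<Sum>x\<in>configs. occupation T x * reward_i r x)"
    unfolding occupation_def by (intro sum.cong refl suminf_mult2[symmetric] joint_below_summable)
  finally show ?thesis .
qed

definition "occupation_avg T x = ring_prob i / real T * occupation T x"

lemma reward_upto_eq_occupation_avg: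
  "reward_upto N cl lam phi r p init0 i T / real T = (\<Sum>x\<in>configs. occupation_avg T x * reward_i r x)"
  unfolding reward_upto_ring_reward law_def[symmetric] reward_law
  by (simp add: occupation_avg_def sum_distrib_left sum_divide_distrib mult.assoc)

lemma prob_vector_occupation_avg:
  assumes "0 < T"
  shows "prob_vector configs (occupation_avg T)"
proof -
  have "sum (occupation_avg T) configs = (ring_prob i / real T) * (real T / ring_prob i)"
    unfolding occupation_avg_def by (simp only: sum_distrib_left[symmetric] sum_occupation)
  also have "\<dots> = 1" using ring_prob_i_pos assms by simp
  finally show ?thesis
    unfolding prob_vector_def occupation_avg_def using ring_prob_i_pos occupation_nonneg occupation_zero
    by auto
qed

lemma occupation_avg_approx_stationary:
  assumes y: "y \<in> configs"
  shows "(\<lambda>n. kernel_apply configs jump (occupation_avg (Suc n)) y - occupation_avg (Suc n) y) \<longlonglongrightarrow> 0"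
proof -
  have eq: "kernel_apply configs jump (occupation_avg (Suc n)) y - occupation_avg (Suc n) y
      = ring_prob i / real (Suc n) * (last_ring_total (Suc n) y - joint_below (Suc n) 0 y)" for n
    unfolding occupation_avg_def kernel_apply_scale
    using occupation_approx_stationary[of "Suc n" y] y
    by (simp add: right_diff_distrib[symmetric] diff_divide_distrib[symmetric])
  have "\<bar>last_ring_total (Suc n) y - joint_below (Suc n) 0 y\<bar> \<le> 1" for n
    using last_ring_total_bounds[of "Suc n" y] joint_below_0_bounds[of "Suc n" y] by linarith
  then have bound: "norm (ring_prob i / real (Suc n) * (last_ring_total (Suc n) y - joint_below (Suc n) 0 y))
      \<le> ring_prob i * inverse (real (Suc n))" for n
    using ring_prob_i_pos by (simp add: abs_mult divide_inverse mult_left_le)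
  have "(\<lambda>n. ring_prob i * inverse (real (Suc n))) \<longlonglongrightarrow> 0"
    using tendsto_mult_left[OF LIMSEQ_inverse_real_of_nat, of "ring_prob i"] by simp
  then show ?thesis
    unfolding eq by (rule Lim_null_comparison[OF always_eventually[OF allI[OF bound]]])
qed

lemma Jpay_init0_eq_stationary_expectation:
  assumes reach: "\<forall>x\<in>configs. (x, z) \<in> (support_rel jump)\<^sup>*"
    and st: "stationary_vector configs jump \<pi>"
  shows "Jpay N cl lam phi r p init0 i = (\<Sum>x\<in>configs. \<pi> x * reward_i r x)"
proof -
  have "(\<lambda>n. occupation_avg (Suc n) x) \<longlonglongrightarrow> \<pi> x" for x
  proof (rule approx_stationary_tendsto[OF finite_configs closed_kernel_jump reach _ _ st,
        where v = "\<lambda>n. occupation_avg (Suc n)"])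
    show "\<forall>n. prob_vector configs (occupation_avg (Suc n))"
      using prob_vector_occupation_avg by simp
    show "\<forall>y\<in>configs. (\<lambda>n. kernel_apply configs jump (occupation_avg (Suc n)) y - occupation_avg (Suc n) y)
        \<longlonglongrightarrow> 0"
      using occupation_avg_approx_stationary by blast
  qed
  then have "(\<lambda>n. reward_upto N cl lam phi r p init0 i (Suc n) / real (Suc n))
      \<longlonglongrightarrow> (\<Sum>x\<in>configs. \<pi> x * reward_i r x)"
    unfolding reward_upto_eq_occupation_avg by (intro tendsto_sum tendsto_mult_right) simp
  then show ?thesis unfolding Jpay_def by (rule limI[OF LIMSEQ_imp_Suc])
qed

end

context jump_chain
begin

text \<open>The initial configurations are arbitrary functions on all of \<open>nat\<close>; restricting them to the
  players gives an initial law on \<open>configs\<close> with the same payoff.\<close>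

lemma Jpay_eq_stationary_expectation:
  assumes init_ok: "\<forall>x\<in>set_pmf init. \<forall>j<N. x j \<in> S (cl j)"
    and reach: "\<forall>x\<in>configs. (x, z) \<in> (support_rel jump)\<^sup>*"
    and st: "stationary_vector configs jump \<pi>"
  shows "Jpay N cl lam phi r p init i = (\<Sum>x\<in>configs. \<pi> x * reward_i r x)"
proof -
  have "trunc x \<in> configs" if "x \<in> set_pmf init" for x
    using init_ok that by (simp add: trunc_def configs_def Pi_iff)
  then interpret J: jump_chain_init N cl lam phi p i S "map_pmf trunc init"
    by unfold_locales auto
  have "reward_upto N cl lam phi r p init i T = reward_upto N cl lam phi r p (map_pmf trunc init) i T" for T
    unfolding reward_upto_ring_reward by (simp only: expectation_trunc[where init = init])
  then have "Jpay N cl lam phi r p init i = Jpay N cl lam phi r p (map_pmf trunc init) i"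
    by (simp only: Jpay_def)
  then show ?thesis using J.Jpay_init0_eq_stationary_expectation[OF reach st] by simp
qed

end

section \<open>The product of the stationary laws\<close>

lemma bind_upd_stationary_pmf:
  fixes A :: "'s pmf" and B :: "(nat \<Rightarrow> 's) pmf"
  assumes st: "bind_pmf A K = A"
  shows "bind_pmf (map_pmf (\<lambda>(y, f). f(j := y)) (pair_pmf A B)) (\<lambda>x. map_pmf (\<lambda>s'. x(j := s')) (K (x j)))
       = map_pmf (\<lambda>(y, f). f(j := y)) (pair_pmf A B)"
proof -
  have upd_upd: "fun_upd (f(j := y)) j = fun_upd f j" for f :: "nat \<Rightarrow> 's" and y
    by (auto simp: fun_eq_iff)
  have "bind_pmf (map_pmf (\<lambda>(y, f). f(j := y)) (pair_pmf A B)) (\<lambda>x. map_pmf (\<lambda>s'. x(j := s')) (K (x j)))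
      = bind_pmf A (\<lambda>y. bind_pmf B (\<lambda>f. map_pmf (\<lambda>s'. f(j := s')) (K y)))"
    by (simp add: bind_map_pmf pair_pmf_def bind_assoc_pmf bind_return_pmf upd_upd)
  also have "\<dots> = bind_pmf A (\<lambda>y. bind_pmf (K y) (\<lambda>s'. bind_pmf B (\<lambda>f. return_pmf (f(j := s')))))"
    by (simp add: map_pmf_def bind_commute_pmf[of B])
  also have "\<dots> = map_pmf (\<lambda>(y, f). f(j := y)) (pair_pmf (bind_pmf A K) B)"
    by (simp add: map_pmf_def pair_pmf_def bind_assoc_pmf bind_return_pmf)
  finally show ?thesis using st by simp
qed

locale jump_chain_stationary = jump_chain +
  fixes \<eta> :: "nat \<Rightarrow> _ \<Rightarrow> real"
  assumes stationary_\<eta>: "\<forall>j<N. stationary_vector (S (cl j)) (\<lambda>s. phi (cl j) s (p j s)) (\<eta> j)"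
    and reachable_state_\<eta>: "\<forall>j<N. \<exists>z\<in>S (cl j). \<forall>s\<in>S (cl j). (s, z) \<in> (support_rel (\<lambda>s. phi (cl j) s (p j s)))\<^sup>*"
begin

definition "stat_pmf j = embed_pmf (\<eta> j)"

text \<open>The default value \<open>undefined\<close> makes the product law live on the extensional \<open>configs\<close>.\<close>

definition "product_law = Pi_pmf {..<N} undefined stat_pmf"

lemma pmf_stat_pmf: "j < N \<Longrightarrow> pmf (stat_pmf j) s = \<eta> j s"
  unfolding stat_pmf_def using stationary_\<eta> finite_S
  by (intro pmf_embed_pmf_prob_vector[where B = "S (cl j)"]) (auto simp: stationary_vector_def)

lemma set_stat_pmf: "j < N \<Longrightarrow> set_pmf (stat_pmf j) \<subseteq> S (cl j)"
  using pmf_stat_pmf stationary_\<eta> by (auto simp: set_pmf_eq stationary_vector_def prob_vector_def)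

lemma stat_pmf_stationary: "j < N \<Longrightarrow> bind_pmf (stat_pmf j) (\<lambda>s. phi (cl j) s (p j s)) = stat_pmf j"
proof (rule pmf_eqI)
  fix y assume j: "j < N"
  have cl: "closed_kernel (S (cl j)) (\<lambda>s. phi (cl j) s (p j s))" using policy_closed j by (auto simp: closed_kernel_def)
  show "pmf (bind_pmf (stat_pmf j) (\<lambda>s. phi (cl j) s (p j s))) y = pmf (stat_pmf j) y"
  proof (cases "y \<in> S (cl j)")
    case True
    have "pmf (bind_pmf (stat_pmf j) (\<lambda>s. phi (cl j) s (p j s))) y
        = kernel_apply (S (cl j)) (\<lambda>s. phi (cl j) s (p j s)) (pmf (stat_pmf j)) y"
      using kernel_apply_pmf[OF _ set_stat_pmf[OF j]] finite_S by simp
    also have "\<dots> = kernel_apply (S (cl j)) (\<lambda>s. phi (cl j) s (p j s)) (\<eta> j) y"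
      unfolding kernel_apply_def using pmf_stat_pmf[OF j] by simp
    also have "\<dots> = \<eta> j y" using stationary_\<eta> j True by (auto simp: stationary_vector_def)
    finally show ?thesis using pmf_stat_pmf[OF j] by simp
  next
    case False
    have "y \<notin> set_pmf (bind_pmf (stat_pmf j) (\<lambda>s. phi (cl j) s (p j s)))"
      using False set_stat_pmf[OF j] cl by (auto simp: closed_kernel_def)
    moreover have "y \<notin> set_pmf (stat_pmf j)" using False set_stat_pmf[OF j] by auto
    ultimately show ?thesis by (metis pmf_eq_0_set_pmf)
  qed
qed

lemma product_law_split:
  "j < N \<Longrightarrow>
    product_law = map_pmf (\<lambda>(y, f). f(j := y)) (pair_pmf (stat_pmf j) (Pi_pmf ({..<N} - {j}) undefined stat_pmf))"
proof -
  assume j: "j < N"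
  have "{..<N} = insert j ({..<N} - {j})" using j by auto
  then show ?thesis unfolding product_law_def by (metis Pi_pmf_insert finite_Diff finite_lessThan Diff_iff singletonI)
qed

lemma product_law_move_invariant: "j < N \<Longrightarrow> bind_pmf product_law (move j) = product_law"
proof -
  assume j: "j < N"
  have "move j = (\<lambda>x. map_pmf (\<lambda>s'. x(j := s')) ((\<lambda>s. phi (cl j) s (p j s)) (x j)))"
    by (simp add: move_def fun_eq_iff)
  then show ?thesis
    using bind_upd_stationary_pmf[OF stat_pmf_stationary[OF j], of j "Pi_pmf ({..<N} - {j}) undefined stat_pmf"] product_law_split[OF j]
    by simp
qed

lemma product_law_jump_invariant: "bind_pmf product_law jump = product_law"
proof -
  have "bind_pmf product_law jump = bind_pmf (sel N cl lam) (\<lambda>j. bind_pmf product_law (move j))"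
    unfolding jump_def by (rule bind_commute_pmf)
  also have "\<dots> = bind_pmf (sel N cl lam) (\<lambda>j. product_law)"
    by (intro bind_pmf_cong refl) (simp add: set_sel product_law_move_invariant)
  finally show ?thesis by simp
qed

lemma set_product_law: "set_pmf product_law \<subseteq> configs"
proof
  fix x assume "x \<in> set_pmf product_law"
  then have "x \<in> PiE_dflt {..<N} undefined (set_pmf \<circ> stat_pmf)" unfolding product_law_def by (simp add: set_Pi_pmf)
  then show "x \<in> configs" using set_stat_pmf by (auto simp: PiE_dflt_def configs_def PiE_iff extensional_def)
qed

lemma product_law_stationary: "stationary_vector configs jump (pmf product_law)"
  unfolding stationary_vector_def prob_vector_def
proof (intro conjI allI impI ballI)
  show "0 \<le> pmf product_law x" for x by simp
  show "pmf product_law x = 0" if "x \<notin> configs" for x using that set_product_law by (auto simp: pmf_eq_0_set_pmf)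
  show "sum (pmf product_law) configs = 1" using set_product_law finite_configs by (simp add: sum_pmf_eq_1)
  show "kernel_apply configs jump (pmf product_law) y = pmf product_law y" for y
    using kernel_apply_pmf[OF finite_configs set_product_law] product_law_jump_invariant by simp
qed

lemma support_rel_jump_move:
  assumes j: "j < N" and st: "(x j, t) \<in> support_rel (\<lambda>s. phi (cl j) s (p j s))"
  shows "(x, x(j := t)) \<in> support_rel jump"
proof -
  have "x(j := t) \<in> set_pmf (move j x)" using st by (auto simp: move_def support_rel_def)
  then show ?thesis using j by (auto simp: jump_def set_sel support_rel_def)
qed

lemma reach_jump_move:
  assumes x: "x \<in> configs" and j: "j < N"
    and path: "(x j, t) \<in> (support_rel (\<lambda>s. phi (cl j) s (p j s)))\<^sup>*"
  shows "(x, x(j := t)) \<in> (support_rel jump)\<^sup>* \<and> x(j := t) \<in> configs"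
  using path
proof (induction rule: rtrancl_induct)
  case base
  then show ?case using x by simp
next
  case (step t t')
  then have path_t: "(x, x(j := t)) \<in> (support_rel jump)\<^sup>*" and "x(j := t) \<in> configs" by blast+
  then have "t \<in> S (cl j)" using PiE_mem[of "x(j := t)" "{..<N}" "\<lambda>j. S (cl j)" j] j
    by (simp add: configs_def)
  then have "t' \<in> S (cl j)" using step(2) policy_closed j by (auto simp: support_rel_def)
  moreover have "(x(j := t), x(j := t')) \<in> support_rel jump"
    using support_rel_jump_move[OF j, of "x(j := t)" t'] step(2) by simp
  ultimately show ?case using rtrancl_into_rtrancl[OF path_t] configs_upd[OF x j] by blast
qed

text \<open>The players are moved one after the other to a state that each of them reaches from
  everywhere.\<close>

lemma jump_common_reachable_config: "\<exists>z\<in>configs. \<forall>x\<in>configs. (x, z) \<in> (support_rel jump)\<^sup>*"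
proof -
  have "\<forall>j. \<exists>z. j < N \<longrightarrow> z \<in> S (cl j) \<and> (\<forall>s\<in>S (cl j). (s, z) \<in> (support_rel (\<lambda>s. phi (cl j) s (p j s)))\<^sup>*)"
    using reachable_state_\<eta> by metis
  then obtain zs where zs: "\<And>j. j < N \<Longrightarrow> zs j \<in> S (cl j) \<and> (\<forall>s\<in>S (cl j). (s, zs j) \<in> (support_rel (\<lambda>s. phi (cl j) s (p j s)))\<^sup>*)"
    by metis
  define move_first where "move_first = (\<lambda>M x l. if l < M then zs l else x l)"
  have moved: "(x, move_first M x) \<in> (support_rel jump)\<^sup>* \<and> move_first M x \<in> configs" if x: "x \<in> configs" and M: "M \<le> N" for x M
    using M
  proof (induction M)
    case 0 then show ?case using x by (simp add: move_first_def)
  next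
    case (Suc M)
    then have IH: "(x, move_first M x) \<in> (support_rel jump)\<^sup>*" "move_first M x \<in> configs" and MN: "M < N" by auto
    have eq: "move_first (Suc M) x = (move_first M x)(M := zs M)" by (auto simp: move_first_def fun_eq_iff)
    have "move_first M x M = x M" by (simp add: move_first_def)
    moreover have "x M \<in> S (cl M)" using x MN by (auto simp: configs_def PiE_iff)
    ultimately have "(move_first M x M, zs M) \<in> (support_rel (\<lambda>s. phi (cl M) s (p M s)))\<^sup>*" using zs[OF MN] by auto
    from reach_jump_move[OF IH(2) MN this]
    have P1: "(move_first M x, (move_first M x)(M := zs M)) \<in> (support_rel jump)\<^sup>*" and P2: "(move_first M x)(M := zs M) \<in> configs"
      by blast+
    show ?case unfolding eq using rtrancl_trans[OF IH(1) P1] P2 by blast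
  qed
  define z where "z = (\<lambda>l. if l < N then zs l else undefined)"
  have "move_first N x = z" if "x \<in> configs" for x using that by (auto simp: move_first_def z_def fun_eq_iff configs_def PiE_iff extensional_def)
  moreover have "z \<in> configs" using zs by (auto simp: z_def configs_def PiE_iff extensional_def)
  ultimately show ?thesis using moved by (metis order_refl)
qed

lemma Jpay_eq_product_expectation:
  assumes init_ok: "\<forall>x\<in>set_pmf init. \<forall>j<N. x j \<in> S (cl j)"
  shows "Jpay N cl lam phi r p init i = measure_pmf.expectation product_law (reward_i r)"
proof -
  obtain z where "\<forall>x\<in>configs. (x, z) \<in> (support_rel jump)\<^sup>*" using jump_common_reachable_config by auto
  from Jpay_eq_stationary_expectation[OF init_ok this product_law_stationary]
  have "Jpay N cl lam phi r p init i = (\<Sum>x\<in>configs. pmf product_law x * reward_i r x)" .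
  also have "\<dots> = measure_pmf.expectation product_law (reward_i r)"
    by (subst integral_measure_pmf_real[OF finite_configs]) (use set_product_law in \<open>auto simp: mult.commute\<close>)
  finally show ?thesis .
qed

end

section \<open>Concentration of the empirical measure\<close>

text \<open>The mean of the empirical state-action measure when player \<open>j\<close> is distributed according
  to \<open>\<eta> j\<close>.\<close>

definition expected_emp ::
  "nat \<Rightarrow> (nat \<Rightarrow> 'c) \<Rightarrow> (nat \<Rightarrow> 's \<Rightarrow> 'a) \<Rightarrow> (nat \<Rightarrow> 's \<Rightarrow> real) \<Rightarrow> 'c \<Rightarrow> 's \<Rightarrow> 'a \<Rightarrow> real" where
  "expected_emp N cl p \<eta> c s a = (\<Sum>j<N. if cl j = c \<and> p j s = a then \<eta> j s else 0) / real N"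

context jump_chain_stationary
begin

definition "expect g = (\<Sum>e\<in>configs. pmf product_law e * g e)"

lemma expect_eq_expectation: "expect g = measure_pmf.expectation product_law g"
  unfolding expect_def by (subst integral_measure_pmf_real[OF finite_configs]) (use set_product_law in \<open>auto simp: mult.commute\<close>)

lemma expect_sum: "expect (\<lambda>e. \<Sum>j\<in>J. g j e) = (\<Sum>j\<in>J. expect (g j))"
  unfolding expect_def by (subst sum.swap) (simp add: sum_distrib_left)

lemma expect_linear: "expect (\<lambda>e. a * f e + b * g e) = a * expect f + b * expect g"
  unfolding expect_def by (simp add: sum.distrib sum_distrib_left algebra_simps)

lemma expect_const: "expect (\<lambda>e. c) = c"
  unfolding expect_def using set_product_law finite_configs by (simp add: sum_distrib_right[symmetric] sum_pmf_eq_1)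

lemma expect_mono: "(\<And>e. e \<in> configs \<Longrightarrow> f e \<le> g e) \<Longrightarrow> expect f \<le> expect g"
  unfolding expect_def by (intro sum_mono mult_left_mono) auto

lemma expect_coord_expectation:
  assumes j: "j < N"
  shows "expect (\<lambda>e. h (e j)) = measure_pmf.expectation (stat_pmf j) h"
proof -
  have "expect (\<lambda>e. h (e j)) = measure_pmf.expectation (map_pmf (\<lambda>e. e j) product_law) h"
    by (simp add: expect_eq_expectation)
  also have "map_pmf (\<lambda>e. e j) product_law = stat_pmf j" using j by (simp add: product_law_def Pi_pmf_component)
  finally show ?thesis .
qed

lemma expect_coord:
  assumes j: "j < N"
  shows "expect (\<lambda>e. h (e j)) = (\<Sum>t\<in>S (cl j). \<eta> j t * h t)"
proof -
  have "expect (\<lambda>e. h (e j)) = measure_pmf.expectation (stat_pmf j) h"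
    by (rule expect_coord_expectation[OF j])
  also have "\<dots> = (\<Sum>t\<in>S (cl j). h t * pmf (stat_pmf j) t)"
    by (rule integral_measure_pmf_real) (use finite_S set_stat_pmf[OF j] in auto)
  finally show ?thesis using pmf_stat_pmf[OF j] by (simp add: mult.commute)
qed

lemma expect_indep_pair:
  assumes j: "j < N" and l: "l < N" and jl: "j \<noteq> l"
    and fg: "\<And>t. 0 \<le> f t" "\<And>t. 0 \<le> g t"
  shows "expect (\<lambda>e. f (e j) * g (e l)) = expect (\<lambda>e. f (e j)) * expect (\<lambda>e. g (e l))"
proof -
  define F where "F = (\<lambda>x t. if x = j then f t else if x = l then g t else 1)"
  have prodF: "(\<Prod>x\<in>{..<N}. F x (e x)) = f (e j) * g (e l)" for e
  proof -
    have "(\<Prod>x\<in>{..<N}. F x (e x)) = (\<Prod>x\<in>{..<N}. (if x = j then f (e j) else 1) * (if x = l then g (e l) else 1))"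
      by (intro prod.cong refl) (use jl in \<open>auto simp: F_def\<close>)
    also have "\<dots> = f (e j) * g (e l)" using j l by (simp add: prod.distrib prod.delta)
    finally show ?thesis .
  qed
  have intF: "measure_pmf.expectation (stat_pmf x) (F x) = (if x = j then measure_pmf.expectation (stat_pmf j) f else 1) *
      (if x = l then measure_pmf.expectation (stat_pmf l) g else 1)" for x
    using jl by (auto simp: F_def)
  have "expect (\<lambda>e. f (e j) * g (e l)) = measure_pmf.expectation product_law (\<lambda>e. \<Prod>x\<in>{..<N}. F x (e x))"
    by (simp add: expect_eq_expectation prodF)
  also have "\<dots> = (\<Prod>x\<in>{..<N}. measure_pmf.expectation (stat_pmf x) (F x))"
    unfolding product_law_def
    by (rule expectation_prod_Pi_pmf)
       (use fg finite_S set_stat_pmf in \<open>auto simp: F_def intro!: integrable_measure_pmf_finite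
          intro: finite_subset[OF set_stat_pmf]\<close>)
  also have "\<dots> = measure_pmf.expectation (stat_pmf j) f * measure_pmf.expectation (stat_pmf l) g"
    unfolding intF using j l by (simp add: prod.distrib prod.delta)
  also have "measure_pmf.expectation (stat_pmf j) f = expect (\<lambda>e. f (e j))"
    using expect_coord_expectation[OF j] by simp
  also have "measure_pmf.expectation (stat_pmf l) g = expect (\<lambda>e. g (e l))"
    using expect_coord_expectation[OF l] by simp
  finally show ?thesis .
qed

definition "hit c s a j t = (if cl j = c \<and> t = s \<and> p j t = a then 1 else (0::real))"

lemma emp_eq_sum_hit: "emp N cl p e c s a = (\<Sum>j<N. hit c s a j (e j)) / real N"
proof -
  have "real (card {j. j < N \<and> cl j = c \<and> e j = s \<and> p j (e j) = a})
      = real (card {j \<in> {..<N}. cl j = c \<and> e j = s \<and> p j (e j) = a})"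
    by (simp add: conj_commute)
  also have "\<dots> = (\<Sum>j\<in>{j \<in> {..<N}. cl j = c \<and> e j = s \<and> p j (e j) = a}. 1)" by simp
  also have "\<dots> = (\<Sum>j<N. hit c s a j (e j))"
    by (subst sum.inter_filter) (auto simp: hit_def intro!: sum.cong)
  finally show ?thesis by (simp add: emp_def)
qed

lemma hit_01: "0 \<le> hit c s a j t" "hit c s a j t \<le> 1" "hit c s a j t * hit c s a j t = hit c s a j t"
  by (auto simp: hit_def)

lemma expect_abs: "\<bar>expect f\<bar> \<le> expect (\<lambda>e. \<bar>f e\<bar>)"
  unfolding expect_def by (rule order_trans[OF sum_abs]) (simp add: abs_mult)

lemma expect_hit: "j < N \<Longrightarrow> expect (\<lambda>e. hit c s a j (e j)) = (if cl j = c \<and> p j s = a then \<eta> j s else 0)"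
proof -
  assume j: "j < N"
  have "expect (\<lambda>e. hit c s a j (e j)) = (\<Sum>t\<in>S (cl j). \<eta> j t * hit c s a j t)" by (rule expect_coord[OF j])
  also have "\<dots> = (\<Sum>t\<in>S (cl j). if t = s then (if cl j = c \<and> p j s = a then \<eta> j s else 0) else 0)"
    by (intro sum.cong refl) (auto simp: hit_def)
  also have "\<dots> = (if cl j = c \<and> p j s = a then \<eta> j s else 0)"
    using finite_S stationary_\<eta> j by (auto simp: sum.delta stationary_vector_def prob_vector_def)
  finally show ?thesis .
qed

text \<open>The indicators of distinct players are independent under the product law.\<close>

lemma expect_sum_hit_square:
  "expect (\<lambda>e. (\<Sum>j<N. hit c s a j (e j))\<^sup>2) \<le> (\<Sum>j<N. expect (\<lambda>e. hit c s a j (e j)))\<^sup>2 + real N"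
proof -
  let ?z = "\<lambda>j. expect (\<lambda>e. hit c s a j (e j))"
  have "expect (\<lambda>e. (\<Sum>j<N. hit c s a j (e j))\<^sup>2) = expect (\<lambda>e. \<Sum>j<N. \<Sum>l<N. hit c s a j (e j) * hit c s a l (e l))"
    by (simp add: power2_eq_square sum_product)
  also have "\<dots> = (\<Sum>j<N. \<Sum>l<N. expect (\<lambda>e. hit c s a j (e j) * hit c s a l (e l)))"
    by (simp add: expect_sum)
  also have "\<dots> \<le> (\<Sum>j<N. \<Sum>l<N. ?z j * ?z l + (if j = l then 1 else 0))"
  proof (intro sum_mono)
    fix j l assume j: "j \<in> {..<N}" and l: "l \<in> {..<N}"
    show "expect (\<lambda>e. hit c s a j (e j) * hit c s a l (e l)) \<le> ?z j * ?z l + (if j = l then 1 else 0)"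
    proof (cases "j = l")
      case True
      have "expect (\<lambda>e. hit c s a j (e j) * hit c s a l (e l)) \<le> expect (\<lambda>e. 1)"
        using True by (intro expect_mono) (simp add: hit_01)
      then have h1: "expect (\<lambda>e. hit c s a j (e j) * hit c s a l (e l)) \<le> 1" by (simp add: expect_const)
      have h2: "0 \<le> ?z j * ?z l" using True by simp
      from h1 h2 True show ?thesis by (simp only: if_True refl)
    next
      case False
      then show ?thesis using expect_indep_pair[of j l "hit c s a j" "hit c s a l"] j l hit_01 by simp
    qed
  qed
  also have "\<dots> = (\<Sum>j<N. ?z j)\<^sup>2 + real N"
    by (simp add: sum.distrib power2_eq_square sum_product)
  finally show ?thesis .
qed

lemma sum_expect_hit: "(\<Sum>j<N. expect (\<lambda>e. hit c s a j (e j))) / real N = expected_emp N cl p \<eta> c s a"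
  by (simp add: expected_emp_def expect_hit)

lemma expect_emp_sq_dev:
  "expect (\<lambda>e. (emp N cl p e c s a - \<mu>)\<^sup>2) \<le> (expected_emp N cl p \<eta> c s a - \<mu>)\<^sup>2 + 1 / real N"
proof -
  let ?X = "\<lambda>e. \<Sum>j<N. hit c s a j (e j)"
  let ?z = "\<Sum>j<N. expect (\<lambda>e. hit c s a j (e j))"
  have Npos': "0 < real N" using N_pos by simp
  have feq: "(\<lambda>e. (emp N cl p e c s a - \<mu>)\<^sup>2) = (\<lambda>e. (1 / (real N)\<^sup>2) * (?X e)\<^sup>2 + 1 * ((- 2 * \<mu> / real N) * ?X e + \<mu>\<^sup>2 * 1))"
    using Npos' by (auto simp: emp_eq_sum_hit fun_eq_iff power2_eq_square field_simps)
  have e1: "expect (\<lambda>e. (1 / (real N)\<^sup>2) * (?X e)\<^sup>2 + 1 * ((- 2 * \<mu> / real N) * ?X e + \<mu>\<^sup>2 * 1))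
      = (1 / (real N)\<^sup>2) * expect (\<lambda>e. (?X e)\<^sup>2) + 1 * expect (\<lambda>e. (- 2 * \<mu> / real N) * ?X e + \<mu>\<^sup>2 * 1)"
    by (rule expect_linear)
  have e2: "expect (\<lambda>e. (- 2 * \<mu> / real N) * ?X e + \<mu>\<^sup>2 * 1) = (- 2 * \<mu> / real N) * expect ?X + \<mu>\<^sup>2 * expect (\<lambda>e. 1)"
    by (rule expect_linear)
  have e3: "expect ?X = ?z" by (rule expect_sum)
  have "expect (\<lambda>e. (emp N cl p e c s a - \<mu>)\<^sup>2) = (1 / (real N)\<^sup>2) * expect (\<lambda>e. (?X e)\<^sup>2) + (- 2 * \<mu> / real N) * ?z + \<mu>\<^sup>2"
    unfolding feq e1 e2 e3 expect_const by simp
  also have "\<dots> \<le> (1 / (real N)\<^sup>2) * (?z\<^sup>2 + real N) + (- 2 * \<mu> / real N) * ?z + \<mu>\<^sup>2"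
    using expect_sum_hit_square[of c s a] by (intro add_right_mono mult_left_mono) auto
  also have "\<dots> = (?z / real N - \<mu>)\<^sup>2 + 1 / real N"
    using Npos' by (simp add: power2_eq_square field_simps)
  finally show ?thesis unfolding sum_expect_hit .
qed

end

section \<open>Continuity of the rewards\<close>

definition sq_dist_sa :: "('c::finite \<Rightarrow> 's::finite \<Rightarrow> 'a::finite \<Rightarrow> real) \<Rightarrow> ('c \<Rightarrow> 's \<Rightarrow> 'a \<Rightarrow> real) \<Rightarrow> real" where
  "sq_dist_sa \<nu> \<nu>' = (\<Sum>(c, s, a)\<in>UNIV. (\<nu> c s a - \<nu>' c s a)\<^sup>2)"

lemma sq_dist_sa_nonneg: "0 \<le> sq_dist_sa \<nu> \<nu>'"
  by (simp add: sq_dist_sa_def sum_nonneg split_beta)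

lemma dist_vecSA: "dist_class.dist (vecSA \<nu>) (vecSA \<nu>') = sqrt (sq_dist_sa \<nu> \<nu>')"
  by (simp add: dist_vec_def L2_set_def sq_dist_sa_def vecSA_def dist_real_def split_beta)

lemma vecSA_image_XSA: "vecSA ` XSA S A m = {x. (\<lambda>c s a. x $ (c, s, a)) \<in> XSA S A m}"
proof (intro equalityI subsetI)
  fix x assume "x \<in> vecSA ` XSA S A m"
  then obtain \<nu> where "\<nu> \<in> XSA S A m" "x = vecSA \<nu>" by blast
  then show "x \<in> {x. (\<lambda>c s a. x $ (c, s, a)) \<in> XSA S A m}" by (simp add: vecSA_def)
next
  fix x assume "x \<in> {x. (\<lambda>c s a. x $ (c, s, a)) \<in> XSA S A m}"
  moreover have "x = vecSA (\<lambda>c s a. x $ (c, s, a))" by (simp add: vecSA_def vec_eq_iff)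
  ultimately show "x \<in> vecSA ` XSA S A m" by blast
qed

lemma XSA_le_mass:
  fixes S :: "'c \<Rightarrow> 's::finite set" and A :: "'c \<Rightarrow> 's \<Rightarrow> 'a::finite set"
  assumes "\<nu> \<in> XSA S A m"
  shows "\<bar>\<nu> c s a\<bar> \<le> m c"
proof -
  have nn: "\<forall>s a. 0 \<le> \<nu> c s a" and sum_eq: "(\<Sum>s\<in>S c. \<Sum>a\<in>Acl S A c. \<nu> c s a) = m c"
    using assms by (simp_all add: XSA_def)
  show ?thesis
  proof (cases "s \<in> S c \<and> a \<in> Acl S A c")
    case True
    have "\<nu> c s a \<le> (\<Sum>a\<in>Acl S A c. \<nu> c s a)"
      using True nn by (intro member_le_sum) (auto simp: Acl_def)
    also have "\<dots> \<le> (\<Sum>s\<in>S c. \<Sum>a\<in>Acl S A c. \<nu> c s a)"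
      using True nn by (intro member_le_sum[of s "S c" "\<lambda>s. \<Sum>a\<in>Acl S A c. \<nu> c s a"] sum_nonneg) auto
    also have "\<dots> = m c" by (rule sum_eq)
    finally show ?thesis using nn by simp
  next
    case False
    then have "\<nu> c s a = 0" using assms by (auto simp: XSA_def)
    moreover have "0 \<le> m c" unfolding sum_eq[symmetric] using nn by (intro sum_nonneg) auto
    ultimately show ?thesis by simp
  qed
qed

lemma compact_vecSA_XSA:
  fixes S :: "'c::finite \<Rightarrow> 's::finite set" and A :: "'c \<Rightarrow> 's \<Rightarrow> 'a::finite set"
  shows "compact (vecSA ` XSA S A m)"
proof -
  have "closed (vecSA ` XSA S A m)"
    unfolding vecSA_image_XSA unfolding XSA_def mem_Collect_eq
    by (intro closed_Collect_all closed_Collect_conj closed_Collect_imp open_Collect_const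
        closed_Collect_le closed_Collect_eq continuous_intros)
  moreover have "bounded (vecSA ` XSA S A m)"
    unfolding bounded_iff
  proof (intro exI ballI)
    fix x assume "x \<in> vecSA ` XSA S A m"
    then have x: "(\<lambda>c s a. x $ (c, s, a)) \<in> XSA S A m" unfolding vecSA_image_XSA by simp
    have "\<bar>x $ (c, s, a)\<bar> \<le> \<bar>m c\<bar>" for c s a
      using XSA_le_mass[OF x, of c s a] abs_ge_self order_trans by blast
    have "\<bar>x $ k\<bar> \<le> (\<Sum>c\<in>UNIV. \<bar>m c\<bar>)" for k
    proof -
      obtain c s a where k: "k = (c, s, a)" by (cases k)
      have "\<bar>m c\<bar> \<le> (\<Sum>c\<in>UNIV. \<bar>m c\<bar>)" by (intro member_le_sum) auto
      then show ?thesis using \<open>\<bar>x $ (c, s, a)\<bar> \<le> \<bar>m c\<bar>\<close> k by simp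
    qed
    then have "(\<Sum>k\<in>UNIV. \<bar>x $ k\<bar>) \<le> (\<Sum>k\<in>(UNIV :: ('c \<times> 's \<times> 'a) set). \<Sum>c\<in>UNIV. \<bar>m c\<bar>)"
      by (intro sum_mono)
    then show "norm x \<le> real CARD('c \<times> 's \<times> 'a) * (\<Sum>c\<in>UNIV. \<bar>m c\<bar>)"
      using norm_le_l1_cart[of x] by simp
  qed
  ultimately show ?thesis by (simp add: compact_eq_bounded_closed)
qed

lemma A1_continuous_extension:
  fixes S :: "'c::finite \<Rightarrow> 's::finite set" and A :: "'c \<Rightarrow> 's \<Rightarrow> 'a::finite set"
  assumes A1: "assumption_A1 S A m r" and sa: "s \<in> S c" "a \<in> Acl S A c"
  shows "\<exists>g. (\<forall>\<nu>\<in>XSA S A m. g (vecSA \<nu>) = r c s a \<nu>) \<and> continuous_on (vecSA ` XSA S A m) g"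
proof -
  let ?K = "vecSA ` XSA S A m"
  obtain g g' where g: "\<forall>\<nu>\<in>XSA S A m. g (vecSA \<nu>) = r c s a \<nu>"
    and g': "\<forall>\<nu>\<in>XSA S A m. (g has_derivative (\<lambda>h. g' (vecSA \<nu>) \<bullet> h))
               (at (vecSA \<nu>) within {x. \<forall>k. 0 \<le> x $ k})"
    using A1 sa unfolding assumption_A1_def by blast
  have orthant: "?K \<subseteq> {x. \<forall>k. 0 \<le> x $ k}" by (auto simp: XSA_def vecSA_def)
  have "continuous_on ?K g"
    unfolding continuous_on_eq_continuous_within
  proof
    fix x assume "x \<in> ?K"
    then have "continuous (at x within {x. \<forall>k. 0 \<le> x $ k}) g"
      using g' has_derivative_continuous by blast
    then show "continuous (at x within ?K) g" using orthant continuous_within_subset by blast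
  qed
  then show ?thesis using g by blast
qed

lemma A1_continuous_extensions:
  fixes S :: "'c::finite \<Rightarrow> 's::finite set" and A :: "'c \<Rightarrow> 's \<Rightarrow> 'a::finite set"
  assumes A1: "assumption_A1 S A m r"
  obtains g :: "'c \<times> 's \<times> 'a \<Rightarrow> real ^ ('c \<times> 's \<times> 'a) \<Rightarrow> real"
  where "\<And>c s a \<nu>. s \<in> S c \<Longrightarrow> a \<in> Acl S A c \<Longrightarrow> \<nu> \<in> XSA S A m \<Longrightarrow> g (c, s, a) (vecSA \<nu>) = r c s a \<nu>"
    and "\<And>k. continuous_on (vecSA ` XSA S A m) (g k)"
proof -
  let ?K = "vecSA ` XSA S A m"
  have ext: "\<exists>g. (s \<in> S c \<and> a \<in> Acl S A c \<longrightarrow> (\<forall>\<nu>\<in>XSA S A m. g (vecSA \<nu>) = r c s a \<nu>))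
      \<and> continuous_on ?K g" for c s a
    using A1_continuous_extension[OF A1, of s c a] by (cases "s \<in> S c \<and> a \<in> Acl S A c") auto
  have "\<forall>k. \<exists>g. (\<forall>c s a. k = (c, s, a) \<longrightarrow> s \<in> S c \<longrightarrow> a \<in> Acl S A c \<longrightarrow>
      (\<forall>\<nu>\<in>XSA S A m. g (vecSA \<nu>) = r c s a \<nu>)) \<and> continuous_on ?K g"
  proof
    fix k :: "'c \<times> 's \<times> 'a"
    obtain c s a where k: "k = (c, s, a)" by (cases k)
    obtain g where "(s \<in> S c \<and> a \<in> Acl S A c \<longrightarrow> (\<forall>\<nu>\<in>XSA S A m. g (vecSA \<nu>) = r c s a \<nu>))
        \<and> continuous_on ?K g" using ext by blast
    then show "\<exists>g. (\<forall>c s a. k = (c, s, a) \<longrightarrow> s \<in> S c \<longrightarrow> a \<in> Acl S A c \<longrightarrow>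
        (\<forall>\<nu>\<in>XSA S A m. g (vecSA \<nu>) = r c s a \<nu>)) \<and> continuous_on ?K g"
      unfolding k by (intro exI[of _ g]) simp
  qed
  from choice[OF this] obtain g where g: "\<forall>k. (\<forall>c s a. k = (c, s, a) \<longrightarrow> s \<in> S c \<longrightarrow> a \<in> Acl S A c \<longrightarrow>
      (\<forall>\<nu>\<in>XSA S A m. g k (vecSA \<nu>) = r c s a \<nu>)) \<and> continuous_on ?K (g k)"
    by blast
  show ?thesis
  proof (rule that)
    show "g (c, s, a) (vecSA \<nu>) = r c s a \<nu>" if "s \<in> S c" "a \<in> Acl S A c" "\<nu> \<in> XSA S A m" for c s a \<nu>
      using g that by blast
    show "continuous_on ?K (g k)" for k using g by blast
  qed
qed

text \<open>Uniform continuity handles small distances; large ones are absorbed by the bound of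
  \<open>G\<close> on the compact set.\<close>

lemma compact_continuous_quadratic_modulus:
  fixes G :: "'x::metric_space \<Rightarrow> real ^ 'k"
  assumes K: "compact K" and G: "continuous_on K G" and e: "0 < e"
  obtains C where "0 \<le> C"
    and "\<And>x y k. x \<in> K \<Longrightarrow> y \<in> K \<Longrightarrow> \<bar>G x $ k - G y $ k\<bar> \<le> e + C * (dist_class.dist x y)\<^sup>2"
proof -
  obtain d where d: "0 < d"
    and unif: "\<forall>x\<in>K. \<forall>y\<in>K. dist_class.dist y x < d \<longrightarrow> dist_class.dist (G y) (G x) < e"
    using compact_uniformly_continuous[OF G K] e unfolding uniformly_continuous_on_def by blast
  have "bounded (G ` K)" by (rule compact_imp_bounded[OF compact_continuous_image[OF G K]])
  then obtain B where B: "0 < B" and bound: "\<forall>x\<in>K. norm (G x) \<le> B"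
    unfolding bounded_pos by blast
  show ?thesis
  proof (rule that[of "2 * B / d\<^sup>2"])
    fix x y k assume xy: "x \<in> K" "y \<in> K"
    have "0 \<le> 2 * B / d\<^sup>2 * (dist_class.dist x y)\<^sup>2" using B by simp
    show "\<bar>G x $ k - G y $ k\<bar> \<le> e + 2 * B / d\<^sup>2 * (dist_class.dist x y)\<^sup>2"
    proof (cases "dist_class.dist x y < d")
      case True
      then have "dist_class.dist (G x) (G y) < e" using unif xy by (simp add: dist_commute)
      then have "\<bar>G x $ k - G y $ k\<bar> < e"
        using dist_vec_nth_le[where x = "G x" and y = "G y" and i = k] by (simp add: dist_real_def)
      then show ?thesis using \<open>0 \<le> 2 * B / d\<^sup>2 * (dist_class.dist x y)\<^sup>2\<close> by linarith
    next
      case False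
      have "\<bar>G z $ k\<bar> \<le> B" if "z \<in> K" for z
        using component_le_norm_cart[of "G z" k] bound that by fastforce
      then have "\<bar>G x $ k\<bar> \<le> B" "\<bar>G y $ k\<bar> \<le> B" using xy by blast+
      then have "\<bar>G x $ k - G y $ k\<bar> \<le> 2 * B"
        using abs_triangle_ineq4[of "G x $ k" "G y $ k"] by linarith
      also have "\<dots> \<le> 2 * B / d\<^sup>2 * (dist_class.dist x y)\<^sup>2"
        using False d B by (simp add: field_simps mult_left_mono power_mono)
      finally show ?thesis using e by linarith
    qed
  qed (use B d in simp)
qed

lemma A1_reward_modulus:
  fixes S :: "'c::finite \<Rightarrow> 's::finite set" and A :: "'c \<Rightarrow> 's \<Rightarrow> 'a::finite set"
  assumes A1: "assumption_A1 S A m r" and e: "0 < e"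
  obtains K where "0 \<le> K"
    and "\<And>c s a \<nu> \<nu>'. s \<in> S c \<Longrightarrow> a \<in> Acl S A c \<Longrightarrow> \<nu> \<in> XSA S A m \<Longrightarrow> \<nu>' \<in> XSA S A m \<Longrightarrow>
           \<bar>r c s a \<nu> - r c s a \<nu>'\<bar> \<le> e + K * sq_dist_sa \<nu> \<nu>'"
proof -
  obtain g where g: "\<And>c s a \<nu>. s \<in> S c \<Longrightarrow> a \<in> Acl S A c \<Longrightarrow> \<nu> \<in> XSA S A m \<Longrightarrow>
      g (c, s, a) (vecSA \<nu>) = r c s a \<nu>" and cont: "\<And>k. continuous_on (vecSA ` XSA S A m) (g k)"
    using A1_continuous_extensions[OF A1] by blast
  have "continuous_on (vecSA ` XSA S A m) (\<lambda>x. \<chi> k. g k x)" by (intro continuous_intros cont)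
  then obtain K where K: "0 \<le> K" and modulus: "\<And>x y k. x \<in> vecSA ` XSA S A m \<Longrightarrow> y \<in> vecSA ` XSA S A m \<Longrightarrow>
      \<bar>(\<chi> k. g k x) $ k - (\<chi> k. g k y) $ k\<bar> \<le> e + K * (dist_class.dist x y)\<^sup>2"
    using compact_continuous_quadratic_modulus[OF compact_vecSA_XSA _ e] by blast
  show ?thesis
  proof (rule that[OF K])
    fix c s a \<nu> \<nu>'
    assume "s \<in> S c" "a \<in> Acl S A c" "\<nu> \<in> XSA S A m" "\<nu>' \<in> XSA S A m"
    then show "\<bar>r c s a \<nu> - r c s a \<nu>'\<bar> \<le> e + K * sq_dist_sa \<nu> \<nu>'"
      using modulus[of "vecSA \<nu>" "vecSA \<nu>'" "(c, s, a)"] g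
      by (simp add: dist_vecSA sq_dist_sa_nonneg)
  qed
qed

section \<open>Payoffs of profiles close to the equilibrium\<close>

context jump_chain_stationary
begin

lemma expect_sum_sq_dev_emp:
  assumes mean: "\<forall>(c, s, a)\<in>T. \<bar>expected_emp N cl p \<eta> c s a - \<nu> c s a\<bar> \<le> \<beta>"
  shows "expect (\<lambda>e. \<Sum>(c, s, a)\<in>T. (emp N cl p e c s a - \<nu> c s a)\<^sup>2) \<le> real (card T) * (\<beta>\<^sup>2 + 1 / real N)"
proof -
  have "expect (\<lambda>e. \<Sum>(c, s, a)\<in>T. (emp N cl p e c s a - \<nu> c s a)\<^sup>2)
      = (\<Sum>(c, s, a)\<in>T. expect (\<lambda>e. (emp N cl p e c s a - \<nu> c s a)\<^sup>2))"
    using expect_sum[of "\<lambda>(c, s, a) e. (emp N cl p e c s a - \<nu> c s a)\<^sup>2" T] by (simp add: split_beta)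
  also have "\<dots> \<le> (\<Sum>(c, s, a)\<in>T. \<beta>\<^sup>2 + 1 / real N)"
  proof (rule sum_mono, clarify)
    fix c s a assume "(c, s, a) \<in> T"
    then have "\<bar>expected_emp N cl p \<eta> c s a - \<nu> c s a\<bar> \<le> \<beta>" using mean by fastforce
    then have "(expected_emp N cl p \<eta> c s a - \<nu> c s a)\<^sup>2 \<le> \<beta>\<^sup>2"
      by (meson abs_ge_zero order_trans power2_le_iff_abs_le)
    then show "expect (\<lambda>e. (emp N cl p e c s a - \<nu> c s a)\<^sup>2) \<le> \<beta>\<^sup>2 + 1 / real N"
      using expect_emp_sq_dev[of c s a "\<nu> c s a"] by linarith
  qed
  finally show ?thesis by (simp add: split_beta)
qed

text \<open>The payoff is the expected reward under the product of the stationary laws, so replacing the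
  empirical measure by \<open>\<nu>\<close> costs \<open>e\<close> plus \<open>K\<close> times its expected squared deviation from \<open>\<nu>\<close>.\<close>

lemma Jpay_close_to_reward_at:
  assumes init_ok: "\<forall>x\<in>set_pmf init. \<forall>j<N. x j \<in> S (cl j)"
    and K: "0 \<le> K"
    and dev: "\<And>x. x \<in> configs \<Longrightarrow> \<bar>reward_i r x - r (cl i) (x i) (p i (x i)) \<nu>\<bar>
               \<le> e + K * (\<Sum>(c, s, a)\<in>T. (emp N cl p x c s a - \<nu> c s a)\<^sup>2)"
    and mean: "\<forall>(c, s, a)\<in>T. \<bar>expected_emp N cl p \<eta> c s a - \<nu> c s a\<bar> \<le> \<beta>"
  shows "\<bar>Jpay N cl lam phi r p init i - (\<Sum>t\<in>S (cl i). \<eta> i t * r (cl i) t (p i t) \<nu>)\<bar>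
         \<le> e + K * (real (card T) * (\<beta>\<^sup>2 + 1 / real N))"
proof -
  let ?D = "\<lambda>x. \<Sum>(c, s, a)\<in>T. (emp N cl p x c s a - \<nu> c s a)\<^sup>2"
  have "Jpay N cl lam phi r p init i = expect (reward_i r)"
    using Jpay_eq_product_expectation[OF init_ok] expect_eq_expectation by simp
  moreover have "expect (\<lambda>x. r (cl i) (x i) (p i (x i)) \<nu>) = (\<Sum>t\<in>S (cl i). \<eta> i t * r (cl i) t (p i t) \<nu>)"
    by (rule expect_coord[OF i_lt_N])
  moreover have "\<bar>expect (reward_i r) - expect (\<lambda>x. r (cl i) (x i) (p i (x i)) \<nu>)\<bar> \<le> e + K * expect ?D"
  proof -
    have "expect (reward_i r) - expect (\<lambda>x. r (cl i) (x i) (p i (x i)) \<nu>)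
        = expect (\<lambda>x. reward_i r x - r (cl i) (x i) (p i (x i)) \<nu>)"
      using expect_linear[of 1 "reward_i r" "-1"] by simp
    also have "\<bar>\<dots>\<bar> \<le> expect (\<lambda>x. \<bar>reward_i r x - r (cl i) (x i) (p i (x i)) \<nu>\<bar>)" by (rule expect_abs)
    also have "\<dots> \<le> expect (\<lambda>x. e * 1 + K * ?D x)" using dev by (intro expect_mono) simp
    also have "\<dots> = e + K * expect ?D" by (simp only: expect_linear expect_const)
    finally show ?thesis .
  qed
  moreover have "K * expect ?D \<le> K * (real (card T) * (\<beta>\<^sup>2 + 1 / real N))"
    using expect_sum_sq_dev_emp[OF mean] K by (rule mult_left_mono)
  ultimately show ?thesis by linarith
qed

end

lemma muSA_XSA:
  fixes S :: "'c::finite \<Rightarrow> 's::finite set" and A :: "'c \<Rightarrow> 's \<Rightarrow> 'a::finite set"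
  assumes mu: "\<mu> \<in> Xset S A m"
  shows "muSA S A \<mu> \<in> XSA S A m"
  unfolding XSA_def
proof (intro CollectI allI conjI impI)
  fix c
  have nn: "\<forall>s u. 0 \<le> \<mu> c s u" and out: "\<forall>s u. (s \<notin> S c \<or> u \<notin> UD S A c) \<longrightarrow> \<mu> c s u = 0"
    and sm: "(\<Sum>s\<in>S c. \<Sum>u\<in>UD S A c. \<mu> c s u) = m c"
    using mu unfolding Xset_def by auto
  show "0 \<le> muSA S A \<mu> c s a" for s a unfolding muSA_def using nn by (intro sum_nonneg) auto
  show "muSA S A \<mu> c s a = 0" if "s \<notin> S c \<or> a \<notin> Acl S A c" for s a
    unfolding muSA_def
  proof (rule sum.neutral, rule ballI)
    fix u assume u: "u \<in> UD S A c"
    show "\<mu> c s u * (if u s = a then 1 else 0) = 0"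
    proof (cases "s \<in> S c")
      case True
      then have "a \<notin> Acl S A c" using that by auto
      moreover have "u s \<in> Acl S A c" by (meson in_Acl True UD_in_actions u)
      ultimately show ?thesis by auto
    next
      case False then show ?thesis using out by auto
    qed
  qed
  have "(\<Sum>s\<in>S c. \<Sum>a\<in>Acl S A c. muSA S A \<mu> c s a) = (\<Sum>s\<in>S c. \<Sum>u\<in>UD S A c. \<mu> c s u * (\<Sum>a\<in>Acl S A c. (if u s = a then 1 else 0)))"
  proof (intro sum.cong refl)
    fix s
    show "(\<Sum>a\<in>Acl S A c. muSA S A \<mu> c s a) = (\<Sum>u\<in>UD S A c. \<mu> c s u * (\<Sum>a\<in>Acl S A c. (if u s = a then 1 else 0)))"
      unfolding muSA_def by (subst sum.swap) (simp only: sum_distrib_left)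
  qed
  also have "\<dots> = (\<Sum>s\<in>S c. \<Sum>u\<in>UD S A c. \<mu> c s u)"
  proof (intro sum.cong refl)
    fix s u assume s: "s \<in> S c" and u: "u \<in> UD S A c"
    have "u s \<in> Acl S A c" by (meson in_Acl s UD_in_actions u)
    then show "\<mu> c s u * (\<Sum>a\<in>Acl S A c. (if u s = a then 1 else 0)) = \<mu> c s u" by simp
  qed
  finally show "(\<Sum>s\<in>S c. \<Sum>a\<in>Acl S A c. muSA S A \<mu> c s a) = m c" using sm by simp
qed

lemma real_card_filter_eq_sum:
  fixes N :: nat
  shows "real (card {j. j < N \<and> P j}) = (\<Sum>j<N. if P j then 1 else 0)"
proof -
  have "{j. j < N \<and> P j} = {j \<in> {..<N}. P j}" by auto
  then have "real (card {j. j < N \<and> P j}) = (\<Sum>j\<in>{j \<in> {..<N}. P j}. 1)" by simp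
  also have "\<dots> = (\<Sum>j<N. if P j then 1 else 0)" using sum.inter_filter[OF finite_lessThan, of "\<lambda>_. (1::real)" N P] by simp
  finally show ?thesis .
qed

lemma sum_sum_if_eq_pair:
  assumes "finite X" "finite Y" "P \<Longrightarrow> x0 \<in> X" "P \<Longrightarrow> y0 \<in> Y"
  shows "(\<Sum>x\<in>X. \<Sum>y\<in>Y. if P \<and> x0 = x \<and> y0 = y then 1 else (0::real)) = (if P then 1 else 0)"
proof (cases P)
  case True
  then have "(\<Sum>y\<in>Y. if P \<and> x0 = x \<and> y0 = y then 1 else (0::real)) = (if P \<and> x0 = x then 1 else 0)" for x
    using assms by (simp add: sum.delta flip: if_if_eq_conj)
  then show ?thesis using assms True by (simp add: sum.delta flip: if_if_eq_conj)
qed simp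

lemma emp_XSA:
  fixes S :: "'c::finite \<Rightarrow> 's::finite set" and A :: "'c \<Rightarrow> 's \<Rightarrow> 'a::finite set"
  assumes N: "0 < N" and cnt: "\<forall>c. real (card {i. i < N \<and> cl i = c}) = real N * m c"
    and q: "\<forall>j<N. q j \<in> UD S A (cl j)" and e: "\<forall>j<N. e j \<in> S (cl j)"
  shows "emp N cl q e \<in> XSA S A m"
  unfolding XSA_def
proof (intro CollectI allI conjI impI)
  fix c
  show "0 \<le> emp N cl q e c s a" for s a by (simp add: emp_def)
  show "emp N cl q e c s a = 0" if "s \<notin> S c \<or> a \<notin> Acl S A c" for s a
  proof -
    have "{j. j < N \<and> cl j = c \<and> e j = s \<and> q j (e j) = a} = {}"
    proof (rule ccontr)
      assume "{j. j < N \<and> cl j = c \<and> e j = s \<and> q j (e j) = a} \<noteq> {}"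
      then obtain j where j: "j < N" "cl j = c" "e j = s" "q j (e j) = a" by auto
      have sS: "s \<in> S c" using e j by auto
      have "a \<in> A c s" using UD_in_actions[of "q j" S A c s] q j sS by auto
      then have "a \<in> Acl S A c" using sS by (rule in_Acl[rotated])
      then show False using that sS by auto
    qed
    then show ?thesis by (simp add: emp_def)
  qed
  have inner: "(\<Sum>s\<in>S c. \<Sum>a\<in>Acl S A c. (if cl j = c \<and> e j = s \<and> q j (e j) = a then 1 else 0))
      = (if cl j = c then 1 else (0::real))" if j: "j < N" for j
  proof (rule sum_sum_if_eq_pair)
    show "e j \<in> S c" if "cl j = c" using e j that by auto
    then show "q j (e j) \<in> Acl S A c" if "cl j = c"
      using UD_in_actions[of "q j" S A c "e j"] in_Acl[of "e j" S c] q j that by auto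
  qed simp_all
  have "(\<Sum>s\<in>S c. \<Sum>a\<in>Acl S A c. emp N cl q e c s a)
      = (\<Sum>s\<in>S c. \<Sum>a\<in>Acl S A c. \<Sum>j<N. (if cl j = c \<and> e j = s \<and> q j (e j) = a then 1 else 0)) / real N"
    by (simp add: emp_def real_card_filter_eq_sum sum_divide_distrib)
  also have "(\<Sum>s\<in>S c. \<Sum>a\<in>Acl S A c. \<Sum>j<N. (if cl j = c \<and> e j = s \<and> q j (e j) = a then 1 else 0))
      = (\<Sum>j<N. \<Sum>s\<in>S c. \<Sum>a\<in>Acl S A c. (if cl j = c \<and> e j = s \<and> q j (e j) = a then 1 else (0::real)))"
    by (subst sum.swap, subst (2) sum.swap) (rule refl)
  also have "\<dots> = (\<Sum>j<N. if cl j = c then 1 else 0)" using inner by simp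
  also have "\<dots> = real N * m c" using cnt real_card_filter_eq_sum[of N "\<lambda>j. cl j = c"] by simp
  finally show "(\<Sum>s\<in>S c. \<Sum>a\<in>Acl S A c. emp N cl q e c s a) = m c" using N by simp
qed

lemma Fval_eq:
  fixes S :: "'c::finite \<Rightarrow> 's::finite set" and A :: "'c \<Rightarrow> 's \<Rightarrow> 'a::finite set"
  assumes u: "u \<in> UD S A c"
  shows "Fval S A phi lam r c u \<mu> = (\<Sum>t\<in>S c. eta S phi lam c u t * r c t (u t) (muSA S A \<mu>))"
  unfolding Fval_def
proof (intro sum.cong refl)
  fix t assume t: "t \<in> S c"
  have "u t \<in> A c t" using UD_in_actions[OF u t] .
  then show "(\<Sum>a\<in>A c t. eta S phi lam c u t * (if a = u t then 1 else 0) * r c t a (muSA S A \<mu>)) =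
        eta S phi lam c u t * r c t (u t) (muSA S A \<mu>)"
  proof -
    have "(\<Sum>a\<in>A c t. eta S phi lam c u t * (if a = u t then 1 else 0) * r c t a (muSA S A \<mu>))
        = (\<Sum>a\<in>A c t. if a = u t then eta S phi lam c u t * r c t a (muSA S A \<mu>) else 0)"
      by (intro sum.cong refl) auto
    also have "\<dots> = eta S phi lam c u t * r c t (u t) (muSA S A \<mu>)" using \<open>u t \<in> A c t\<close> by (simp add: sum.delta)
    finally show ?thesis .
  qed
qed

lemma sum_players_by_policy:
  fixes N :: nat and S :: "'c::finite \<Rightarrow> 's::finite set" and A :: "'c \<Rightarrow> 's \<Rightarrow> 'a::finite set"
  assumes q: "\<forall>j<N. q j \<in> UD S A (cl j)"
  shows "(\<Sum>j<N. if cl j = c then G (q j) else (0::real)) = (\<Sum>u\<in>UD S A c. real (card {j. j < N \<and> cl j = c \<and> q j = u}) * G u)"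
proof -
  have fin: "finite (UD S A c)" by (simp add: UD_def finite_PiE)
  have "(\<Sum>j<N. if cl j = c then G (q j) else 0) = (\<Sum>j\<in>{j \<in> {..<N}. cl j = c}. G (q j))"
    by (rule sum.inter_filter[symmetric]) simp
  also have "\<dots> = (\<Sum>u\<in>UD S A c. \<Sum>j\<in>{j' \<in> {j \<in> {..<N}. cl j = c}. q j' = u}. G (q j))"
    by (rule sum.group[symmetric]) (use fin q in auto)
  also have "\<dots> = (\<Sum>u\<in>UD S A c. real (card {j. j < N \<and> cl j = c \<and> q j = u}) * G u)"
  proof (intro sum.cong refl)
    fix u
    have "{j' \<in> {j \<in> {..<N}. cl j = c}. q j' = u} = {j. j < N \<and> cl j = c \<and> q j = u}" by auto
    then show "(\<Sum>j\<in>{j' \<in> {j \<in> {..<N}. cl j = c}. q j' = u}. G (q j)) = real (card {j. j < N \<and> cl j = c \<and> q j = u}) * G u"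
      by simp
  qed
  finally show ?thesis .
qed

lemma expected_emp_change_one_player:
  assumes i: "i < N" and same: "\<And>j. j < N \<Longrightarrow> j \<noteq> i \<Longrightarrow> q' j = q j \<and> \<eta>' j = \<eta> j"
    and bounds: "0 \<le> \<eta> i s" "\<eta> i s \<le> 1" "0 \<le> \<eta>' i s" "\<eta>' i s \<le> 1"
  shows "\<bar>expected_emp N cl q' \<eta>' c s a - expected_emp N cl q \<eta> c s a\<bar> \<le> 1 / real N"
proof -
  define g where "g q \<eta> j = (if cl j = c \<and> q j s = a then \<eta> j s else (0::real))"
    for q \<eta> j
  have iN: "i \<in> {..<N}" using i by simp
  have "(\<Sum>j\<in>{..<N} - {i}. g q' \<eta>' j) = (\<Sum>j\<in>{..<N} - {i}. g q \<eta> j)"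
    using same by (intro sum.cong) (auto simp: g_def)
  then have "(\<Sum>j<N. g q' \<eta>' j) - (\<Sum>j<N. g q \<eta> j) = g q' \<eta>' i - g q \<eta> i"
    using sum.remove[OF finite_lessThan iN, of "g q'  \<eta>'"] sum.remove[OF finite_lessThan iN, of "g q \<eta>"]
    by linarith
  moreover have "0 \<le> g q' \<eta>' i" "g q' \<eta>' i \<le> 1" "0 \<le> g q \<eta> i" "g q \<eta> i \<le> 1"
    using bounds by (auto simp: g_def)
  ultimately have "\<bar>(\<Sum>j<N. g q' \<eta>' j) - (\<Sum>j<N. g q \<eta> j)\<bar> \<le> 1" by linarith
  then show ?thesis
    by (simp add: expected_emp_def g_def[abs_def] diff_divide_distrib[symmetric] divide_right_mono)
qed

lemma mass_pos_if_played:
  assumes i: "i < N"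
    and close: "\<bar>real (card {j. j < N \<and> cl j = cl i \<and> p j = p i}) / real N - mass S \<mu> (cl i) (p i)\<bar> < 1 / real N"
  shows "0 < mass S \<mu> (cl i) (p i)"
proof -
  have "i \<in> {j. j < N \<and> cl j = cl i \<and> p j = p i}" using i by simp
  then have "card {j. j < N \<and> cl j = cl i \<and> p j = p i} \<noteq> 0" by (auto simp: card_eq_0_iff)
  then have "1 \<le> card {j. j < N \<and> cl j = cl i \<and> p j = p i}" by linarith
  then have "1 / real N \<le> real (card {j. j < N \<and> cl j = cl i \<and> p j = p i}) / real N"
    by (simp add: divide_right_mono)
  then show ?thesis using close by linarith
qed

lemma small_beyond_threshold:
  fixes K B \<epsilon> :: real
  assumes K: "0 \<le> K" and \<epsilon>: "0 < \<epsilon>" and N: "nat \<lceil>4 * K * (B\<^sup>2 + 1) / \<epsilon>\<rceil> < N"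
  shows "K * ((B / real N)\<^sup>2 + 1 / real N) < \<epsilon> / 4"
proof -
  have "(B / real N)\<^sup>2 = B\<^sup>2 / real N / real N" by (simp add: power2_eq_square)
  also have "\<dots> \<le> B\<^sup>2 / real N / 1" using N by (intro divide_left_mono) auto
  finally have "(B / real N)\<^sup>2 + 1 / real N \<le> (B\<^sup>2 + 1) / real N" by (simp add: add_divide_distrib)
  then have "K * ((B / real N)\<^sup>2 + 1 / real N) \<le> K * ((B\<^sup>2 + 1) / real N)"
    by (rule mult_left_mono[OF _ K])
  also have "\<dots> < \<epsilon> / 4"
  proof -
    have "4 * K * (B\<^sup>2 + 1) / \<epsilon> \<le> real (nat \<lceil>4 * K * (B\<^sup>2 + 1) / \<epsilon>\<rceil>)"
      by (rule real_nat_ceiling_ge)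
    also have "\<dots> < real N" using N by simp
    finally show ?thesis using \<epsilon> N by (simp add: field_simps)
  qed
  finally show ?thesis .
qed

locale MSNE_model =
  fixes S :: "'c::finite \<Rightarrow> 's::finite set" and A :: "'c \<Rightarrow> 's \<Rightarrow> 'a::finite set"
    and phi :: "'c \<Rightarrow> 's \<Rightarrow> 'a \<Rightarrow> 's pmf" and lam m :: "'c \<Rightarrow> real"
    and r :: "'c \<Rightarrow> 's \<Rightarrow> 'a \<Rightarrow> ('c \<Rightarrow> 's \<Rightarrow> 'a \<Rightarrow> real) \<Rightarrow> real"
    and \<mu> :: "'c \<Rightarrow> 's \<Rightarrow> ('s \<Rightarrow> 'a) \<Rightarrow> real"
  assumes mass_pos: "\<forall>c. 0 < m c" and rate_pos: "\<forall>c. 0 < lam c"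
    and kernel: "\<forall>c. \<forall>s\<in>S c. \<forall>a\<in>A c s. set_pmf (phi c s a) \<subseteq> S c"
    and A1: "assumption_A1 S A m r" and A2: "assumption_A2 S A phi"
    and equilibrium: "MSNE S A phi lam m r \<mu>"
begin

lemma \<mu>_Xset: "\<mu> \<in> Xset S A m"
  using equilibrium by (simp add: MSNE_def)

lemma S_nonempty: "S c \<noteq> {}"
proof
  assume empty: "S c = {}"
  have "(\<Sum>s\<in>S c. \<Sum>u\<in>UD S A c. \<mu> c s u) = m c" using \<mu>_Xset by (auto simp: Xset_def)
  then have "m c = 0" using empty by simp
  then show False using mass_pos[rule_format, of c] by simp
qed

lemma eta_policy_stationary:
  assumes "u \<in> UD S A c"
  shows "stationary_vector (S c) (\<lambda>s. phi c s (u s)) (eta S phi lam c u)"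
  by (rule eta_stationary[OF kernel assms _ A2 S_nonempty]) (use rate_pos in simp_all)

lemma eta_bounds:
  assumes "u \<in> UD S A c"
  shows "0 \<le> eta S phi lam c u s \<and> eta S phi lam c u s \<le> 1"
proof -
  have "prob_vector (S c) (eta S phi lam c u)"
    using eta_policy_stationary[OF assms] by (simp add: stationary_vector_def)
  then show ?thesis using prob_vector_le_1[of "S c"] by (simp add: prob_vector_def)
qed

lemma profile_jump_chain_stationary:
  assumes i: "i < N" and q: "\<forall>j<N. q j \<in> UD S A (cl j)"
  shows "jump_chain_stationary N cl lam phi q i S (\<lambda>j. eta S phi lam (cl j) (q j))"
proof unfold_locales
  show "\<forall>j<N. \<forall>s\<in>S (cl j). set_pmf (phi (cl j) s (q j s)) \<subseteq> S (cl j)"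
  proof (intro allI impI ballI)
    fix j s assume j: "j < N" and s: "s \<in> S (cl j)"
    have "q j s \<in> A (cl j) s" using UD_in_actions[of "q j" S A "cl j" s] q j s by simp
    then show "set_pmf (phi (cl j) s (q j s)) \<subseteq> S (cl j)" using kernel s by simp
  qed
  show "\<forall>j<N. stationary_vector (S (cl j)) (\<lambda>s. phi (cl j) s (q j s)) (eta S phi lam (cl j) (q j))"
    using q eta_policy_stationary by blast
  show "\<forall>j<N. \<exists>z\<in>S (cl j). \<forall>s\<in>S (cl j). (s, z) \<in> (support_rel (\<lambda>s. phi (cl j) s (q j s)))\<^sup>*"
  proof (intro allI impI)
    fix j assume "j < N"
    then show "\<exists>z\<in>S (cl j). \<forall>s\<in>S (cl j). (s, z) \<in> (support_rel (\<lambda>s. phi (cl j) s (q j s)))\<^sup>*"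
      using A2_common_reachable_state[OF kernel q[rule_format] _ A2] by simp
  qed
qed (use i rate_pos in simp_all)

lemma muSA_eq_sum_mass:
  "muSA S A \<mu> c s a = (\<Sum>u\<in>UD S A c. mass S \<mu> c u * (if u s = a then eta S phi lam c u s else 0))"
  unfolding muSA_def
proof (intro sum.cong refl)
  fix u assume u: "u \<in> UD S A c"
  show "\<mu> c s u * (if u s = a then 1 else 0) = mass S \<mu> c u * (if u s = a then eta S phi lam c u s else 0)"
  proof (cases "s \<in> S c")
    case True
    then show ?thesis using equilibrium u by (auto simp: MSNE_def)
  next
    case False
    then have "\<mu> c s u = 0" using \<mu>_Xset by (auto simp: Xset_def)
    moreover have "eta S phi lam c u s = 0"
      using eta_policy_stationary[OF u] False by (simp add: stationary_vector_def prob_vector_def)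
    ultimately show ?thesis by simp
  qed
qed

lemma expected_emp_eq_sum_counts:
  assumes q: "\<forall>j<N. q j \<in> UD S A (cl j)"
  shows "expected_emp N cl q (\<lambda>j. eta S phi lam (cl j) (q j)) c s a
    = (\<Sum>u\<in>UD S A c. real (card {j. j < N \<and> cl j = c \<and> q j = u}) / real N
                        * (if u s = a then eta S phi lam c u s else 0))"
proof -
  have "(\<Sum>j<N. if cl j = c \<and> q j s = a then eta S phi lam (cl j) (q j) s else 0)
      = (\<Sum>j<N. if cl j = c then (if q j s = a then eta S phi lam c (q j) s else 0) else 0)"
    by (intro sum.cong) auto
  also have "\<dots> = (\<Sum>u\<in>UD S A c. real (card {j. j < N \<and> cl j = c \<and> q j = u})
                                  * (if u s = a then eta S phi lam c u s else 0))"
    by (rule sum_players_by_policy[OF q])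
  finally show ?thesis by (simp add: expected_emp_def sum_divide_distrib)
qed

text \<open>The policy counts of the profile are within \<open>1/N\<close> of the masses of \<open>\<mu>\<close>, and \<open>\<mu>\<close>
  distributes each mass according to the stationary law of its policy.\<close>

lemma expected_emp_close_muSA:
  assumes q: "\<forall>j<N. q j \<in> UD S A (cl j)"
    and counts: "\<forall>u\<in>UD S A c. \<bar>real (card {j. j < N \<and> cl j = c \<and> q j = u}) / real N - mass S \<mu> c u\<bar> < 1 / real N"
  shows "\<bar>expected_emp N cl q (\<lambda>j. eta S phi lam (cl j) (q j)) c s a - muSA S A \<mu> c s a\<bar>
    \<le> real (card (UD S A c)) / real N"
proof -
  let ?G = "\<lambda>u. if u s = a then eta S phi lam c u s else 0"
  have "\<bar>expected_emp N cl q (\<lambda>j. eta S phi lam (cl j) (q j)) c s a - muSA S A \<mu> c s a\<bar>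
      = \<bar>\<Sum>u\<in>UD S A c. (real (card {j. j < N \<and> cl j = c \<and> q j = u}) / real N - mass S \<mu> c u) * ?G u\<bar>"
    unfolding expected_emp_eq_sum_counts[OF q] muSA_eq_sum_mass
    by (simp add: sum_subtractf left_diff_distrib)
  also have "\<dots> \<le> (\<Sum>u\<in>UD S A c. \<bar>(real (card {j. j < N \<and> cl j = c \<and> q j = u}) / real N - mass S \<mu> c u) * ?G u\<bar>)"
    by (rule sum_abs)
  also have "\<dots> \<le> (\<Sum>u\<in>UD S A c. 1 / real N)"
  proof (rule sum_mono)
    fix u assume u: "u \<in> UD S A c"
    have G: "0 \<le> ?G u" "?G u \<le> 1" using eta_bounds[OF u, of s] by auto
    have "\<bar>real (card {j. j < N \<and> cl j = c \<and> q j = u}) / real N - mass S \<mu> c u\<bar> * ?G u \<le> 1 / real N * 1"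
      using counts u G by (intro mult_mono) auto
    then show "\<bar>(real (card {j. j < N \<and> cl j = c \<and> q j = u}) / real N - mass S \<mu> c u) * ?G u\<bar> \<le> 1 / real N"
      using G by (simp add: abs_mult)
  qed
  finally show ?thesis by simp
qed

lemma deviation_profiles_close_muSA:
  assumes i: "i < N" and p: "\<forall>j<N. p j \<in> UD S A (cl j)" and v: "v \<in> UD S A (cl i)"
    and counts: "\<forall>c. \<forall>u\<in>UD S A c.
      \<bar>real (card {j. j < N \<and> cl j = c \<and> p j = u}) / real N - mass S \<mu> c u\<bar> < 1 / real N"
    and U: "\<And>c. real (card (UD S A c)) \<le> U"
  shows "\<forall>c s a. \<bar>expected_emp N cl p (\<lambda>j. eta S phi lam (cl j) (p j)) c s a - muSA S A \<mu> c s a\<bar>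
           \<le> (U + 1) / real N"
    and "\<forall>c s a. \<bar>expected_emp N cl (p(i := v)) (\<lambda>j. eta S phi lam (cl j) ((p(i := v)) j)) c s a
           - muSA S A \<mu> c s a\<bar> \<le> (U + 1) / real N"
proof (safe intro!: allI)
  fix c s a
  have profile: "\<bar>expected_emp N cl p (\<lambda>j. eta S phi lam (cl j) (p j)) c s a - muSA S A \<mu> c s a\<bar>
      \<le> real (card (UD S A c)) / real N"
    using expected_emp_close_muSA[OF p spec[OF counts, of c]] .
  have "\<bar>expected_emp N cl (p(i := v)) (\<lambda>j. eta S phi lam (cl j) ((p(i := v)) j)) c s a
        - expected_emp N cl p (\<lambda>j. eta S phi lam (cl j) (p j)) c s a\<bar> \<le> 1 / real N"
    using eta_bounds[OF v, of s] eta_bounds[of "p i" "cl i" s] p i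
    by (intro expected_emp_change_one_player[OF i]) auto
  moreover have "real (card (UD S A c)) / real N \<le> U / real N" using U[of c] by (simp add: divide_right_mono)
  ultimately show "\<bar>expected_emp N cl p (\<lambda>j. eta S phi lam (cl j) (p j)) c s a - muSA S A \<mu> c s a\<bar>
      \<le> (U + 1) / real N"
    and "\<bar>expected_emp N cl (p(i := v)) (\<lambda>j. eta S phi lam (cl j) ((p(i := v)) j)) c s a
        - muSA S A \<mu> c s a\<bar> \<le> (U + 1) / real N"
    using profile by (simp_all add: add_divide_distrib)
qed

lemma Jpay_close_to_Fval:
  assumes e: "0 < e"
  obtains K where "0 \<le> K"
    and "\<And>N cl q init i \<beta>. i < N \<Longrightarrow> \<forall>c. real (card {j. j < N \<and> cl j = c}) = real N * m c \<Longrightarrow>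
           \<forall>j<N. q j \<in> UD S A (cl j) \<Longrightarrow> \<forall>x\<in>set_pmf init. \<forall>j<N. x j \<in> S (cl j) \<Longrightarrow>
           \<forall>c s a. \<bar>expected_emp N cl q (\<lambda>j. eta S phi lam (cl j) (q j)) c s a - muSA S A \<mu> c s a\<bar> \<le> \<beta> \<Longrightarrow>
           \<bar>Jpay N cl lam phi r q init i - Fval S A phi lam r (cl i) (q i) \<mu>\<bar> \<le> e + K * (\<beta>\<^sup>2 + 1 / real N)"
proof -
  obtain K where K: "0 \<le> K" and modulus: "\<And>c s a \<nu> \<nu>'. s \<in> S c \<Longrightarrow> a \<in> Acl S A c \<Longrightarrow>
      \<nu> \<in> XSA S A m \<Longrightarrow> \<nu>' \<in> XSA S A m \<Longrightarrow> \<bar>r c s a \<nu> - r c s a \<nu>'\<bar> \<le> e + K * sq_dist_sa \<nu> \<nu>'"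
    using A1_reward_modulus[OF A1 e] by blast
  show ?thesis
  proof (rule that[of "K * real CARD('c \<times> 's \<times> 'a)"])
    show "0 \<le> K * real CARD('c \<times> 's \<times> 'a)" using K by simp
    fix N cl q init i \<beta>
    assume i: "i < N" and counts: "\<forall>c. real (card {j. j < N \<and> cl j = c}) = real N * m c"
      and q: "\<forall>j<N. q j \<in> UD S A (cl j)" and init: "\<forall>x\<in>set_pmf init. \<forall>j<N. x j \<in> S (cl j)"
      and mean: "\<forall>c s a. \<bar>expected_emp N cl q (\<lambda>j. eta S phi lam (cl j) (q j)) c s a - muSA S A \<mu> c s a\<bar> \<le> \<beta>"
    interpret jump_chain_stationary N cl lam phi q i S "\<lambda>j. eta S phi lam (cl j) (q j)"
      by (rule profile_jump_chain_stationary[OF i q])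
    have "\<bar>Jpay N cl lam phi r q init i - (\<Sum>t\<in>S (cl i). eta S phi lam (cl i) (q i) t * r (cl i) t (q i t) (muSA S A \<mu>))\<bar>
        \<le> e + K * (real (card (UNIV :: ('c \<times> 's \<times> 'a) set)) * (\<beta>\<^sup>2 + 1 / real N))"
    proof (rule Jpay_close_to_reward_at[OF init K])
      fix x assume "x \<in> configs"
      then have x: "\<forall>j<N. x j \<in> S (cl j)" by (simp add: configs_def PiE_iff)
      have "q i (x i) \<in> A (cl i) (x i)" using UD_in_actions[of "q i" S A "cl i" "x i"] q i x by simp
      then have "q i (x i) \<in> Acl S A (cl i)" using in_Acl[of "x i" S "cl i" "q i (x i)" A] x i by simp
      then show "\<bar>reward_i r x - r (cl i) (x i) (q i (x i)) (muSA S A \<mu>)\<bar>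
          \<le> e + K * (\<Sum>(c, s, a)\<in>UNIV. (emp N cl q x c s a - muSA S A \<mu> c s a)\<^sup>2)"
        using modulus[OF _ _ emp_XSA[OF N_pos counts q x] muSA_XSA[OF \<mu>_Xset]] x i
        by (simp add: reward_i_def sq_dist_sa_def)
    qed (use mean in auto)
    then show "\<bar>Jpay N cl lam phi r q init i - Fval S A phi lam r (cl i) (q i) \<mu>\<bar>
        \<le> e + K * real CARD('c \<times> 's \<times> 'a) * (\<beta>\<^sup>2 + 1 / real N)"
      using Fval_eq[of "q i" S A "cl i" phi lam r \<mu>] q i by (simp add: mult.assoc)
  qed
qed

text \<open>With \<open>e = \<epsilon>/4\<close>, both the profile and any unilateral deviation from it have payoffs
  within \<open>\<epsilon>/2\<close> of the mean field values \<open>F\<close> once \<open>N\<close> is large, and the deviating player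
  uses a policy charged by \<open>\<mu>\<close>, hence optimal for \<open>F\<close>.\<close>

lemma weak_eps_equilibrium_threshold:
  assumes \<epsilon>: "0 < \<epsilon>"
  obtains N0 :: nat where
    "\<And>N cl p init i v. N0 < N \<Longrightarrow> \<forall>c. real (card {i. i < N \<and> cl i = c}) = real N * m c \<Longrightarrow>
       \<forall>i<N. p i \<in> UD S A (cl i) \<Longrightarrow> \<forall>x\<in>set_pmf init. \<forall>i<N. x i \<in> S (cl i) \<Longrightarrow>
       \<forall>c. \<forall>u\<in>UD S A c. \<bar>real (card {i. i < N \<and> cl i = c \<and> p i = u}) / real N - mass S \<mu> c u\<bar> < 1 / real N \<Longrightarrow>
       i < N \<Longrightarrow> v \<in> UD S A (cl i) \<Longrightarrow>
       Jpay N cl lam phi r (p(i := v)) init i - \<epsilon> \<le> Jpay N cl lam phi r p init i"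
proof -
  have "0 < \<epsilon> / 4" using \<epsilon> by simp
  then obtain K where K: "0 \<le> K" and close: "\<And>N cl q init i \<beta>. i < N \<Longrightarrow>
      \<forall>c. real (card {j. j < N \<and> cl j = c}) = real N * m c \<Longrightarrow>
      \<forall>j<N. q j \<in> UD S A (cl j) \<Longrightarrow> \<forall>x\<in>set_pmf init. \<forall>j<N. x j \<in> S (cl j) \<Longrightarrow>
      \<forall>c s a. \<bar>expected_emp N cl q (\<lambda>j. eta S phi lam (cl j) (q j)) c s a - muSA S A \<mu> c s a\<bar> \<le> \<beta> \<Longrightarrow>
      \<bar>Jpay N cl lam phi r q init i - Fval S A phi lam r (cl i) (q i) \<mu>\<bar> \<le> \<epsilon> / 4 + K * (\<beta>\<^sup>2 + 1 / real N)"
    using Jpay_close_to_Fval by blast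
  define U where "U = (\<Sum>c\<in>UNIV. real (card (UD S A c)))"
  have U: "real (card (UD S A c)) \<le> U" for c unfolding U_def by (intro member_le_sum) auto
  show ?thesis
  proof (rule that[of "nat \<lceil>4 * K * ((U + 1)\<^sup>2 + 1) / \<epsilon>\<rceil>"])
    fix N cl p init i v
    assume N: "nat \<lceil>4 * K * ((U + 1)\<^sup>2 + 1) / \<epsilon>\<rceil> < N"
      and classes: "\<forall>c. real (card {i. i < N \<and> cl i = c}) = real N * m c"
      and p: "\<forall>i<N. p i \<in> UD S A (cl i)" and init: "\<forall>x\<in>set_pmf init. \<forall>i<N. x i \<in> S (cl i)"
      and counts: "\<forall>c. \<forall>u\<in>UD S A c.
        \<bar>real (card {i. i < N \<and> cl i = c \<and> p i = u}) / real N - mass S \<mu> c u\<bar> < 1 / real N"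
      and i: "i < N" and v: "v \<in> UD S A (cl i)"
    have p': "\<forall>j<N. (p(i := v)) j \<in> UD S A (cl j)" using p v by simp
    note close_profiles = deviation_profiles_close_muSA[OF i p v counts U]
    have "\<bar>Jpay N cl lam phi r p init i - Fval S A phi lam r (cl i) (p i) \<mu>\<bar>
        \<le> \<epsilon> / 4 + K * (((U + 1) / real N)\<^sup>2 + 1 / real N)"
      by (rule close[OF i classes p init close_profiles(1)])
    moreover have "\<bar>Jpay N cl lam phi r (p(i := v)) init i - Fval S A phi lam r (cl i) v \<mu>\<bar>
        \<le> \<epsilon> / 4 + K * (((U + 1) / real N)\<^sup>2 + 1 / real N)"
      using close[OF i classes p' init close_profiles(2)] by (simp only: fun_upd_same)
    moreover have "Fval S A phi lam r (cl i) v \<mu> \<le> Fval S A phi lam r (cl i) (p i) \<mu>"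
      using equilibrium p i v mass_pos_if_played[OF i bspec[OF spec[OF counts, of "cl i"] p[rule_format, OF i]]]
      by (simp add: MSNE_def)
    moreover have "K * (((U + 1) / real N)\<^sup>2 + 1 / real N) < \<epsilon> / 4"
      by (rule small_beyond_threshold[OF K \<epsilon> N])
    ultimately show "Jpay N cl lam phi r (p(i := v)) init i - \<epsilon> \<le> Jpay N cl lam phi r p init i"
      by linarith
  qed
qed

end

theorem theorem2:
  fixes S :: "'c::finite \<Rightarrow> 's::finite set"
    and A :: "'c \<Rightarrow> 's \<Rightarrow> 'a::finite set"
    and phi :: "'c \<Rightarrow> 's \<Rightarrow> 'a \<Rightarrow> 's pmf"
    and lam m :: "'c \<Rightarrow> real"
    and r :: "'c \<Rightarrow> 's \<Rightarrow> 'a \<Rightarrow> ('c \<Rightarrow> 's \<Rightarrow> 'a \<Rightarrow> real) \<Rightarrow> real"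
    and \<mu> :: "'c \<Rightarrow> 's \<Rightarrow> ('s \<Rightarrow> 'a) \<Rightarrow> real"
  assumes mass_pos: "\<forall>c. 0 < m c"
    and rate_pos: "\<forall>c. 0 < lam c"
    and actions_ne: "\<forall>c. \<forall>s\<in>S c. A c s \<noteq> {}"
    and kernel: "\<forall>c. \<forall>s\<in>S c. \<forall>a\<in>A c s. set_pmf (phi c s a) \<subseteq> S c"
    and A1: "assumption_A1 S A m r"
    and A2: "assumption_A2 S A phi"
    and eq: "MSNE S A phi lam m r \<mu>"
  shows "\<forall>\<epsilon>>0. \<exists>N\<epsilon>::nat. \<forall>N>N\<epsilon>. \<forall>(cl :: nat \<Rightarrow> 'c) (p :: nat \<Rightarrow> 's \<Rightarrow> 'a) (init :: (nat \<Rightarrow> 's) pmf).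
           (\<forall>c. real (card {i. i < N \<and> cl i = c}) = real N * m c) \<longrightarrow>
           (\<forall>i<N. p i \<in> UD S A (cl i)) \<longrightarrow>
           (\<forall>x\<in>set_pmf init. \<forall>i<N. x i \<in> S (cl i)) \<longrightarrow>
           (\<forall>c. \<forall>u\<in>UD S A c.
              \<bar>real (card {i. i < N \<and> cl i = c \<and> p i = u}) / real N - mass S \<mu> c u\<bar> < 1 / real N) \<longrightarrow>
           (\<forall>i<N. \<forall>v\<in>UD S A (cl i).
              Jpay N cl lam phi r p init i \<ge> Jpay N cl lam phi r (p(i := v)) init i - \<epsilon>)"
proof -
  interpret MSNE_model S A phi lam m r \<mu>
    using mass_pos rate_pos kernel A1 A2 eq by unfold_locales
  show ?thesis
    by (intro allI impI, erule weak_eps_equilibrium_threshold) blast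
qed

end
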